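(* Let $n\ge 1$, let $(U,\rho)$ be a separable metric space, $y_0\in\mathbb{R}^n$, and let $G:[0,+\infty)^2\to\mathbb{R}$, $A:[0,+\infty)\to\mathbb{R}^{n\times n}$, $b:[0,+\infty)\times U\to\mathbb{R}^n$ satisfy: (P2) $G(t,r)$ is measurable in $t\in[0,+\infty)$, continuously differentiable in $r\in[0,+\infty)$, $G(t,0)=0$ for all $t\ge 0$, and for every $M>0$, $\sup_{(t,r)\in[0,M]^2}\left|\frac{\partial G(t,r)}{\partial r}\right|<+\infty$; (P3) $A(\cdot)\in L^\infty_{loc}([0,+\infty);\mathbb{R}^{n\times n})$, i.e. $\sup_{t\in[0,T]}\|A(t)\|<+\infty$ for every $T>0$; (P4) $b$ is measurable in $t$ and continuous in $u$, and for each $t$ the set $U(t)=\{b(t,u)\mid u\in U\}$ is a convex compact set. Consider the controlled system $y'(t)=f(t,y(t),u(t))$, $t>0$, $y(0)=y_0$, with $f(t,y,u)=G(t,|y|)\frac{y}{|y|}+A(t)y+b(t,u)$. Let $(T,y(\cdot),u(\cdot))\in\mathcal{P}$ with $\limsup_{t\to T^-}|y(t)|<+\infty$, let $u_k(\cdot)\in\mathcal{U}$ ($k\ge1$), and suppose $b(\cdot,u_k(\cdot))\to b(\cdot,u(\cdot))$ weakly in $L^2([0,T+1];\mathbb{R}^n)$. Then there exist $\delta>0$ and $K>0$ such that, for every $k\ge K$, the solution $y_k(\cdot)$ of the system with control $u_k(\cdot)$ exists on $[0,T+\delta]$ and satisfies $$|y_k(t)-y(t)|\le 1\qquad\text{for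 all } t\in[0,T+\delta],$$ where $y(\cdot)$ denotes the solution of the system with control $u(\cdot)$ on $[0,T+\delta]$.
   Context: $\|A\|=\sup_{|x|=1}|Ax|$ is the operator norm. For $T>0$ and a control $u$, a function $y$ is a solution on $[0,T)$ if $y\in C([0,T);\mathbb{R}^n)$ and $y(t)=y_0+\int_0^t f(s,y(s),u(s))\,ds$ for all $t\in(0,T)$ (solutions on closed intervals are defined analogously). $\mathcal{U}$ is the set of measurable functions $u:[0,+\infty)\to U$. $\mathcal{P}$ is the set of triples $(T,y(\cdot),u(\cdot))$ with $T\in(0,+\infty)$, $u\in\mathcal{U}$ and $y$ a solution on $[0,T)$ with control $u$. *)

theory Defs
  imports "HOL-Analysis.Analysis"
begin

text \<open>Right-hand side f(t,y,u) = G(t,|y|) y/|y| + A(t) y + b(t,u).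
  At y = 0 the term y/|y| is 0 by the Isabelle convention inverse 0 = 0
  (and G(t,0) = 0 anyway).\<close>
definition rhs ::
  "(real \<Rightarrow> real \<Rightarrow> real) \<Rightarrow> (real \<Rightarrow> real^'n^'n) \<Rightarrow> (real \<Rightarrow> 'u \<Rightarrow> real^'n)
    \<Rightarrow> real \<Rightarrow> real^'n \<Rightarrow> 'u \<Rightarrow> real^'n" where
  "rhs G A b t y u = G t (norm y) *\<^sub>R (y /\<^sub>R norm y) + A t *v y + b t u"

definition controls :: "(real \<Rightarrow> 'u::topological_space) set" where
  "controls = {u. u \<in> borel_measurable (lebesgue_on {0..})}"

definition sol_open ::
  "(real \<Rightarrow> real^'n \<Rightarrow> 'u \<Rightarrow> real^'n) \<Rightarrow> real^'n \<Rightarrow> real \<Rightarrow> (real \<Rightarrow> real^'n) \<Rightarrow> (real \<Rightarrow> 'u) \<Rightarrow> bool" where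
  "sol_open f y0 T y u \<longleftrightarrow> continuous_on {0..<T} y \<and>
     (\<forall>t\<in>{0<..<T}. (\<lambda>s. f s (y s) (u s)) absolutely_integrable_on {0..t} \<and>
        y t = y0 + integral {0..t} (\<lambda>s. f s (y s) (u s)))"

definition sol_closed ::
  "(real \<Rightarrow> real^'n \<Rightarrow> 'u \<Rightarrow> real^'n) \<Rightarrow> real^'n \<Rightarrow> real \<Rightarrow> (real \<Rightarrow> real^'n) \<Rightarrow> (real \<Rightarrow> 'u) \<Rightarrow> bool" where
  "sol_closed f y0 T y u \<longleftrightarrow> continuous_on {0..T} y \<and>
     (\<forall>t\<in>{0<..T}. (\<lambda>s. f s (y s) (u s)) absolutely_integrable_on {0..t} \<and>
        y t = y0 + integral {0..t} (\<lambda>s. f s (y s) (u s)))"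

definition admissible_triples ::
  "(real \<Rightarrow> real^'n \<Rightarrow> 'u::topological_space \<Rightarrow> real^'n) \<Rightarrow> real^'n \<Rightarrow>
     (real \<times> (real \<Rightarrow> real^'n) \<times> (real \<Rightarrow> 'u)) set" where
  "admissible_triples f y0 = {(T, y, u). T > 0 \<and> u \<in> controls \<and> sol_open f y0 T y u}"

definition in_L2 :: "real set \<Rightarrow> (real \<Rightarrow> real^'n) \<Rightarrow> bool" where
  "in_L2 S g \<longleftrightarrow> g \<in> borel_measurable (lebesgue_on S) \<and> (\<lambda>s. norm (g s) ^ 2) integrable_on S"

definition weakly_L2 :: "real set \<Rightarrow> (nat \<Rightarrow> real \<Rightarrow> real^'n) \<Rightarrow> (real \<Rightarrow> real^'n) \<Rightarrow> bool" where
  "weakly_L2 S F g \<longleftrightarrow> (\<forall>k. in_L2 S (F k)) \<and> in_L2 S g \<and>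
     (\<forall>h. in_L2 S h \<longrightarrow>
        (\<lambda>k. integral S (\<lambda>s. F k s \<bullet> h s)) \<longlonglongrightarrow> integral S (\<lambda>s. g s \<bullet> h s))"

end

theory Submission
  imports Defs
begin

text \<open>Replace the state by its projection onto a ball containing the trajectory: the truncated
  right-hand side is globally Lipschitz on [0, T+1], so the truncated equation has a unique
  solution for every integrable control term, and this solution coincides with every genuine
  solution as long as it stays strictly inside the ball. For the control u the truncated solution
  agrees with y on [0, T) and, by continuity, stays well inside the ball a little beyond T.
  Weak L^2 convergence of the control terms forces, by a gliding hump argument, uniform convergence
  of their primitives on [0, T+1]; by Gronwall's inequality the truncated solutions for the controls
  u_k then converge uniformly to the one for u, so for large k they remain in the ball and are the
  genuine solutions.\<close>

section \<open>Gronwall's inequality and integral equations\<close>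

lemma gronwall_inequality:
  fixes e :: "real \<Rightarrow> real"
  assumes cont: "continuous_on {0..t} e" and L: "0 \<le> L"
    and le: "\<And>\<tau>. \<tau> \<in> {0..t} \<Longrightarrow> e \<tau> \<le> \<epsilon> + L * integral {0..\<tau>} e"
    and tau: "\<tau> \<in> {0..t}"
  shows "e \<tau> \<le> \<epsilon> * exp (L * \<tau>)"
proof -
  define W where "W x = \<epsilon> + L * integral {0..x} e" for x
  define V where "V x = W x * exp (- (L * x))" for x
  have dW: "(W has_real_derivative L * e x) (at x within {0..t})" if "x \<in> {0..t}" for x
    unfolding W_def
    by (auto intro!: derivative_eq_intros integral_has_real_derivative[OF cont that])
  have dV: "(V has_real_derivative (L * e x - L * W x) * exp (- (L * x))) (at x within {0..t})"
    if "x \<in> {0..t}" for x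
    unfolding V_def
    by (rule derivative_eq_intros dW that refl | simp add: algebra_simps)+
  have contV: "continuous_on {0..\<tau>} V"
  proof -
    have "continuous_on {0..t} V"
      using dV by (meson DERIV_continuous continuous_at_imp_continuous_on continuous_on_eq_continuous_within)
    then show ?thesis by (rule continuous_on_subset) (use tau in auto)
  qed
  have "V \<tau> \<le> V 0"
  proof (rule DERIV_nonpos_imp_decreasing_open[of 0 \<tau> V])
    show "0 \<le> \<tau>" using tau by auto
    fix x assume x: "0 < x" "x < \<tau>"
    then have xi: "x \<in> interior {0..t}" using tau by auto
    have "(V has_real_derivative (L * e x - L * W x) * exp (- (L * x))) (at x)"
      using dV[of x] xi at_within_interior[OF xi] x tau by auto
    moreover have "(L * e x - L * W x) * exp (- (L * x)) \<le> 0"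
    proof -
      have "L * e x \<le> L * W x" using le[of x] x tau L unfolding W_def
        by (intro mult_left_mono) auto
      then show ?thesis by (intro mult_nonpos_nonneg) auto
    qed
    ultimately show "\<exists>y. (V has_real_derivative y) (at x) \<and> y \<le> 0" by blast
  qed (rule contV)
  moreover have "V 0 = \<epsilon>" by (simp add: V_def W_def)
  ultimately have "W \<tau> \<le> \<epsilon> * exp (L * \<tau>)"
    unfolding V_def by (simp add: exp_minus field_simps)
  then show ?thesis using le[OF tau] unfolding W_def by simp
qed

text \<open>Picard iteration takes place in the Banach space of bounded continuous functions on the
  whole line; a function on {0..b} is embedded by extending it constantly.\<close>

definition clip :: "real \<Rightarrow> real \<Rightarrow> real" where "clip b t = min (max t 0) b"

lemma clip_in: "0 \<le> b \<Longrightarrow> clip b t \<in> {0..b}" by (auto simp: clip_def)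

lemma clip_id: "t \<in> {0..b} \<Longrightarrow> clip b t = t" by (auto simp: clip_def)

lemma continuous_on_clip: "continuous_on UNIV (clip b)"
  unfolding clip_def by (intro continuous_intros)

lemma bcontfun_clip:
  fixes f :: "real \<Rightarrow> 'a::real_normed_vector"
  assumes "continuous_on {0..b} f" "0 \<le> b"
  shows "(\<lambda>t. f (clip b t)) \<in> bcontfun"
proof -
  have "compact (f ` {0..b})" by (rule compact_continuous_image[OF assms(1)]) auto
  then obtain B where B: "\<forall>x\<in>f ` {0..b}. norm x \<le> B"
    by (meson bounded_iff compact_imp_bounded)
  show ?thesis
  proof (rule bcontfun_normI)
    show "continuous_on UNIV (\<lambda>t. f (clip b t))"
      by (rule continuous_on_compose2[OF assms(1) continuous_on_clip]) (use clip_in assms(2) in auto)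
    show "\<And>x. norm (f (clip b x)) \<le> B" using B clip_in[OF assms(2)] by blast
  qed
qed

lemma has_integral_power_0:
  assumes "0 \<le> t"
  shows "((\<lambda>s::real. s ^ m) has_integral t ^ Suc m / Suc m) {0..t}"
proof -
  have "((\<lambda>s::real. s ^ m) has_integral ((\<lambda>s. s ^ Suc m / Suc m) t - (\<lambda>s. s ^ Suc m / Suc m) 0)) {0..t}"
    by (rule fundamental_theorem_of_calculus[OF assms])
      (auto intro!: derivative_eq_intros simp: has_real_derivative_iff_has_vector_derivative[symmetric] simp del: of_nat_Suc,
       auto simp: field_simps power_eq_if)
  then show ?thesis by simp
qed

lemma ex_power_div_fact_less_1: "\<exists>m. (c::real) ^ m / fact m < 1"
proof -
  have "(\<lambda>m. inverse (fact m) * c ^ m) \<longlonglongrightarrow> 0"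
    by (rule summable_LIMSEQ_zero[OF summable_exp])
  then have "eventually (\<lambda>m. norm (inverse (fact m) * c ^ m) < 1) sequentially"
    using tendsto_norm_zero[OF \<open>_ \<longlonglongrightarrow> 0\<close>] order_tendstoD(2) zero_less_one by blast
  then obtain m where "norm (inverse (fact m) * c ^ m) < 1" by (meson eventually_sequentially order_refl)
  then have "\<bar>c ^ m / fact m\<bar> < 1" by (simp add: divide_inverse mult.commute)
  then have "c ^ m / fact m < 1" by linarith
  then show ?thesis by blast
qed

lemma lipschitz_integral_equation_exists:
  fixes P :: "real \<Rightarrow> 'a::euclidean_space \<Rightarrow> 'a"
  assumes Tp: "0 \<le> T'" and L: "0 \<le> L"
    and lip: "\<And>s x z. s \<in> {0..T'} \<Longrightarrow> norm (P s x - P s z) \<le> L * norm (x - z)"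
    and intg: "\<And>z. continuous_on {0..T'} z \<Longrightarrow> (\<lambda>s. P s (z s)) absolutely_integrable_on {0..T'}"
  shows "\<exists>x. continuous_on {0..T'} x \<and> (\<forall>t\<in>{0..T'}. x t = y0 + integral {0..t} (\<lambda>s. P s (x s)))"
proof -
  define \<Psi> where "\<Psi> g t = y0 + integral {0..t} (\<lambda>s. P s (g s))" for g :: "real \<Rightarrow> 'a" and t
  have intI: "(\<lambda>s. P s (g s)) integrable_on {0..t}" if "continuous_on {0..T'} g" "t \<le> T'" for g t
  proof -
    have "(\<lambda>s. P s (g s)) integrable_on {0..T'}"
      using intg[OF that(1)] by (simp add: absolutely_integrable_on_def)
    then show ?thesis by (rule integrable_on_subinterval) (use that in auto)
  qed
  have contPsi: "continuous_on {0..T'} (\<Psi> g)" if "continuous_on {0..T'} g" for g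
    unfolding \<Psi>_def
    by (intro continuous_intros indefinite_integral_continuous_1 intI[OF that]) simp
  define \<Phi> where "\<Phi> g = Bcontfun (\<lambda>t. \<Psi> (apply_bcontfun g) (clip T' t))" for g :: "real \<Rightarrow>\<^sub>C 'a"
  have Phi_app: "apply_bcontfun (\<Phi> g) t = \<Psi> (apply_bcontfun g) (clip T' t)" for g t
    unfolding \<Phi>_def
    by (subst Bcontfun_inverse) (auto intro!: bcontfun_clip contPsi Tp)
  have est: "\<forall>t\<in>{0..T'}. norm (apply_bcontfun ((\<Phi> ^^ m) x) t - apply_bcontfun ((\<Phi> ^^ m) y) t)
      \<le> (L * t) ^ m / fact m * dist x y" for m x y
  proof (induction m)
    case 0
    then show ?case using dist_bounded[of x _ y] by (simp add: dist_norm)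
  next
    case (Suc m)
    define X where "X = (\<Phi> ^^ m) x"
    define Y where "Y = (\<Phi> ^^ m) y"
    define D where "D = dist x y"
    have D: "0 \<le> D" by (simp add: D_def)
    show ?case
    proof
      fix t assume t: "t \<in> {0..T'}"
      have eq: "apply_bcontfun ((\<Phi> ^^ Suc m) x) t - apply_bcontfun ((\<Phi> ^^ Suc m) y) t
          = integral {0..t} (\<lambda>s. P s (X s) - P s (Y s))"
        using t by (simp add: X_def Y_def Phi_app clip_id \<Psi>_def integral_diff intI)
      have "norm (integral {0..t} (\<lambda>s. P s (X s) - P s (Y s)))
          \<le> integral {0..t} (\<lambda>s. L * ((L * s) ^ m / fact m * D))"
      proof (rule integral_norm_bound_integral)
        show "(\<lambda>s. P s (X s) - P s (Y s)) integrable_on {0..t}"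
          using t by (auto intro!: integrable_diff intI)
        show "(\<lambda>s. L * ((L * s) ^ m / fact m * D)) integrable_on {0..t}"
          by (intro integrable_continuous_real continuous_intros) auto
        fix s assume s: "s \<in> {0..t}"
        then have "norm (P s (X s) - P s (Y s)) \<le> L * norm (X s - Y s)"
          using t by (intro lip) auto
        also have "\<dots> \<le> L * ((L * s) ^ m / fact m * D)"
          using Suc.IH s t L unfolding X_def Y_def D_def by (intro mult_left_mono) auto
        finally show "norm (P s (X s) - P s (Y s)) \<le> L * ((L * s) ^ m / fact m * D)" .
      qed
      also have "integral {0..t} (\<lambda>s. L * ((L * s) ^ m / fact m * D))
          = L * (L ^ m / fact m * D) * integral {0..t} (\<lambda>s. s ^ m)"
        by (simp add: power_mult_distrib field_simps flip: integral_mult_right integral_mult_left)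
      also have "\<dots> = (L * t) ^ Suc m / fact (Suc m) * D"
        using integral_unique[OF has_integral_power_0[of t m]] t
        by (simp add: power_mult_distrib divide_simps del: of_nat_Suc)
      finally show "norm (apply_bcontfun ((\<Phi> ^^ Suc m) x) t - apply_bcontfun ((\<Phi> ^^ Suc m) y) t)
          \<le> (L * t) ^ Suc m / fact (Suc m) * dist x y"
        using eq by (simp add: D_def)
    qed
  qed
  have distest: "dist ((\<Phi> ^^ m) x) ((\<Phi> ^^ m) y) \<le> (L * T') ^ m / fact m * dist x y" for m x y
  proof (rule dist_bound)
    fix t
    show "dist (apply_bcontfun ((\<Phi> ^^ m) x) t) (apply_bcontfun ((\<Phi> ^^ m) y) t) \<le> (L * T') ^ m / fact m * dist x y"
    proof (cases m)
      case 0
      then show ?thesis using dist_bounded[of x t y] by simp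
    next
      case (Suc k)
      have "apply_bcontfun ((\<Phi> ^^ m) z) t = apply_bcontfun ((\<Phi> ^^ m) z) (clip T' t)" for z
        using Suc clip_in[OF Tp] by (simp add: Phi_app clip_id)
      then have "dist (apply_bcontfun ((\<Phi> ^^ m) x) t) (apply_bcontfun ((\<Phi> ^^ m) y) t)
          \<le> (L * clip T' t) ^ m / fact m * dist x y"
        using est[of m x y] clip_in[OF Tp, of t] by (simp add: dist_norm)
      also have "\<dots> \<le> (L * T') ^ m / fact m * dist x y"
        using clip_in[OF Tp, of t] L
        by (intro mult_right_mono divide_right_mono power_mono mult_left_mono) auto
      finally show ?thesis .
    qed
  qed
  obtain m where m: "(L * T') ^ m / fact m < 1" using ex_power_div_fact_less_1 by blast
  have "\<exists>!x. (\<Phi> ^^ m) x = x"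
    by (rule banach_fix_type[of "(L * T') ^ m / fact m"]) (use m distest L Tp in auto)
  then obtain x where x: "(\<Phi> ^^ m) x = x" and xu: "\<And>z. (\<Phi> ^^ m) z = z \<Longrightarrow> z = x" by blast
  have "(\<Phi> ^^ m) (\<Phi> x) = \<Phi> x" by (metis x funpow_swap1)
  then have fx: "\<Phi> x = x" using xu by blast
  show ?thesis
  proof (intro exI conjI ballI)
    show "continuous_on {0..T'} (apply_bcontfun x)" by simp
    fix t assume t: "t \<in> {0..T'}"
    have "apply_bcontfun x t = apply_bcontfun (\<Phi> x) t" by (simp add: fx)
    also have "\<dots> = y0 + integral {0..t} (\<lambda>s. P s (apply_bcontfun x s))"
      using t by (simp add: Phi_app clip_id \<Psi>_def)
    finally show "apply_bcontfun x t = y0 + integral {0..t} (\<lambda>s. P s (apply_bcontfun x s))" .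
  qed
qed

lemma lipschitz_integral_equation_dist_le:
  fixes P Q :: "real \<Rightarrow> 'a::euclidean_space \<Rightarrow> 'a"
  assumes L: "0 \<le> L"
    and lip: "\<And>s x z. s \<in> {0..t} \<Longrightarrow> norm (P s x - P s z) \<le> L * norm (x - z)"
    and c1: "continuous_on {0..t} x1" and c2: "continuous_on {0..t} x2"
    and i1: "(\<lambda>s. P s (x1 s)) integrable_on {0..t}"
    and i2: "(\<lambda>s. P s (x2 s)) integrable_on {0..t}"
    and i3: "(\<lambda>s. Q s (x2 s)) integrable_on {0..t}"
    and e1: "\<And>\<tau>. \<tau> \<in> {0..t} \<Longrightarrow> x1 \<tau> = y0 + integral {0..\<tau>} (\<lambda>s. P s (x1 s))"
    and e2: "\<And>\<tau>. \<tau> \<in> {0..t} \<Longrightarrow> x2 \<tau> = y0 + integral {0..\<tau>} (\<lambda>s. Q s (x2 s))"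
    and small: "\<And>\<tau>. \<tau> \<in> {0..t} \<Longrightarrow> norm (integral {0..\<tau>} (\<lambda>s. P s (x2 s) - Q s (x2 s))) \<le> \<epsilon>"
    and tau: "\<tau> \<in> {0..t}"
  shows "norm (x1 \<tau> - x2 \<tau>) \<le> \<epsilon> * exp (L * \<tau>)"
proof -
  define e where "e s = norm (x1 s - x2 s)" for s
  have ce: "continuous_on {0..t} e" unfolding e_def by (intro continuous_intros c1 c2)
  have sub: "f integrable_on {0..r}" if "f integrable_on {0..t}" "r \<in> {0..t}" for f :: "real \<Rightarrow> 'a" and r
    by (rule integrable_on_subinterval[OF that(1)]) (use that in auto)
  have "e r \<le> \<epsilon> + L * integral {0..r} e" if r: "r \<in> {0..t}" for r
  proof -
    have "x1 r - x2 r = integral {0..r} (\<lambda>s. P s (x1 s) - P s (x2 s)) + integral {0..r} (\<lambda>s. P s (x2 s) - Q s (x2 s))"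
      using e1[OF r] e2[OF r] sub[OF i1 r] sub[OF i2 r] sub[OF i3 r]
      by (simp add: integral_diff algebra_simps)
    then have "e r \<le> norm (integral {0..r} (\<lambda>s. P s (x1 s) - P s (x2 s))) + \<epsilon>"
      unfolding e_def using small[OF r] norm_triangle_ineq by (smt (verit))
    also have "norm (integral {0..r} (\<lambda>s. P s (x1 s) - P s (x2 s))) \<le> integral {0..r} (\<lambda>s. L * e s)"
    proof (rule integral_norm_bound_integral)
      show "(\<lambda>s. P s (x1 s) - P s (x2 s)) integrable_on {0..r}"
        using sub[OF i1 r] sub[OF i2 r] by (rule integrable_diff)
      show "(\<lambda>s. L * e s) integrable_on {0..r}"
        using r by (intro integrable_continuous_real continuous_intros continuous_on_subset[OF ce]) auto
      fix s assume "s \<in> {0..r}"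
      then show "norm (P s (x1 s) - P s (x2 s)) \<le> L * e s" unfolding e_def using r by (intro lip) auto
    qed
    also have "integral {0..r} (\<lambda>s. L * e s) = L * integral {0..r} e" by simp
    finally show ?thesis by simp
  qed
  then show ?thesis using gronwall_inequality[OF ce L _ tau, of \<epsilon>] unfolding e_def by blast
qed

lemma integral_equation_at_0:
  fixes z :: "real \<Rightarrow> 'a::euclidean_space"
  assumes cz: "continuous_on {0..t} z" and t: "0 < t" and g: "g integrable_on {0..t}"
    and eq: "\<And>\<tau>. \<tau> \<in> {0<..t} \<Longrightarrow> z \<tau> = y0 + integral {0..\<tau>} g"
  shows "z 0 = y0"
proof -
  define \<sigma> where "\<sigma> m = t / real (Suc m)" for m
  have \<sigma>in: "\<sigma> m \<in> {0..t}" "\<sigma> m \<in> {0<..t}" for m using t by (auto simp: \<sigma>_def field_simps)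
  have \<sigma>lim: "\<sigma> \<longlonglongrightarrow> 0"
    unfolding \<sigma>_def using tendsto_mult[OF tendsto_const LIMSEQ_Suc[OF lim_const_over_n[of 1]], of t]
    by (simp add: divide_inverse)
  have "(\<lambda>m. z (\<sigma> m)) \<longlonglongrightarrow> z 0"
    using cz \<sigma>lim \<sigma>in(1) t unfolding continuous_on_sequentially by (simp add: comp_def)
  moreover have ci: "continuous_on {0..t} (\<lambda>x. integral {0..x} g)"
    by (rule indefinite_integral_continuous_1[OF g])
  have A: "\<forall>x. \<forall>a\<in>{0..t}. (\<forall>n. x n \<in> {0..t}) \<and> x \<longlonglongrightarrow> a \<longrightarrow> (\<lambda>n. integral {0..x n} g) \<longlonglongrightarrow> integral {0..a} g"
    using ci unfolding continuous_on_sequentially comp_def by blast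
  have "(\<lambda>m. integral {0..\<sigma> m} g) \<longlonglongrightarrow> integral {0..0} g"
    using A[rule_format, of 0 \<sigma>] \<sigma>lim \<sigma>in(1) t by auto
  then have "(\<lambda>m. y0 + integral {0..\<sigma> m} g) \<longlonglongrightarrow> y0 + integral {0..0} g"
    by (intro tendsto_add tendsto_const)
  moreover have "z (\<sigma> m) = y0 + integral {0..\<sigma> m} g" for m using eq \<sigma>in(2) by simp
  ultimately show ?thesis using LIMSEQ_unique by fastforce
qed

lemma absolutely_integrable_on_cong:
  fixes f g :: "'a::euclidean_space \<Rightarrow> 'b::euclidean_space"
  assumes "\<And>s. s \<in> S \<Longrightarrow> f s = g s" "f absolutely_integrable_on S"
  shows "g absolutely_integrable_on S"
  by (rule absolutely_integrable_spike[OF assms(2) negligible_empty]) (use assms(1) in auto)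

definition solves_on :: "(real \<Rightarrow> 'a::euclidean_space \<Rightarrow> 'a) \<Rightarrow> 'a \<Rightarrow> real \<Rightarrow> (real \<Rightarrow> 'a) \<Rightarrow> bool" where
  "solves_on f y0 t z \<longleftrightarrow> continuous_on {0..t} z \<and>
     (\<forall>\<tau>\<in>{0<..t}. (\<lambda>s. f s (z s)) absolutely_integrable_on {0..\<tau>} \<and>
        z \<tau> = y0 + integral {0..\<tau>} (\<lambda>s. f s (z s)))"

lemma solves_on_subinterval: "solves_on f y0 t z \<Longrightarrow> t' \<le> t \<Longrightarrow> solves_on f y0 t' z"
  unfolding solves_on_def by (auto intro: continuous_on_subset)

lemma solves_on_initial_value:
  assumes "solves_on f y0 t z" "0 < t"
  shows "z 0 = y0"
  by (rule integral_equation_at_0[where g = "\<lambda>s. f s (z s)"])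
    (use assms in \<open>auto simp: solves_on_def absolutely_integrable_on_def\<close>)

section \<open>Weakly null sequences and their primitives\<close>

lemma borel_measurable_lebesgue_on_borel: "g \<in> borel_measurable borel \<Longrightarrow> g \<in> borel_measurable (lebesgue_on S)"
  by (simp add: measurable_restrict_space1 measurable_completion)

lemma borel_measurable_indicator_scaleR: "(\<lambda>s::real. indicator X s *\<^sub>R (c::'a::euclidean_space)) \<in> borel_measurable (lebesgue_on S)"
  if "X \<in> sets borel"
  using that by (intro borel_measurable_lebesgue_on_borel borel_measurable_scaleR borel_measurable_indicator) auto

lemma absolutely_integrable_inner_bounded:
  fixes d h :: "real \<Rightarrow> 'a::euclidean_space"
  assumes d: "d absolutely_integrable_on {0..T1}"
    and h: "h \<in> borel_measurable (lebesgue_on {0..T1})" and hb: "\<And>s. norm (h s) \<le> 1"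
  shows "(\<lambda>s. d s \<bullet> h s) absolutely_integrable_on {0..T1}"
proof (rule measurable_bounded_by_integrable_imp_absolutely_integrable)
  show "(\<lambda>s. d s \<bullet> h s) \<in> borel_measurable (lebesgue_on {0..T1})"
    using absolutely_integrable_imp_borel_measurable[OF d] h by (intro borel_measurable_inner) auto
  show "(\<lambda>s. norm (d s)) integrable_on {0..T1}" using d by (simp add: absolutely_integrable_on_def)
  fix s
  have "norm (d s \<bullet> h s) \<le> norm (d s) * norm (h s)" by (simp add: Cauchy_Schwarz_ineq2)
  also have "\<dots> \<le> norm (d s)" using hb[of s] by (simp add: mult_left_le)
  finally show "norm (d s \<bullet> h s) \<le> norm (d s)" .
qed auto

definition weakly_null_on :: "real \<Rightarrow> (nat \<Rightarrow> real \<Rightarrow> 'a::euclidean_space) \<Rightarrow> bool" where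
  "weakly_null_on T1 d \<longleftrightarrow> (\<forall>k. d k absolutely_integrable_on {0..T1}) \<and>
     (\<forall>h. h \<in> borel_measurable (lebesgue_on {0..T1}) \<longrightarrow> (\<forall>s. norm (h s) \<le> 1) \<longrightarrow>
        (\<lambda>k. integral {0..T1} (\<lambda>s. d k s \<bullet> h s)) \<longlonglongrightarrow> 0)"

lemma weakly_null_onD:
  assumes "weakly_null_on T1 d"
  shows "d k absolutely_integrable_on {0..T1}"
    and "h \<in> borel_measurable (lebesgue_on {0..T1}) \<Longrightarrow> (\<And>s. norm (h s) \<le> 1) \<Longrightarrow>
      (\<lambda>k. integral {0..T1} (\<lambda>s. d k s \<bullet> h s)) \<longlonglongrightarrow> 0"
  using assms unfolding weakly_null_on_def by blast+

lemma weakly_null_primitive_tendsto_0: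
  fixes d :: "nat \<Rightarrow> real \<Rightarrow> 'a::euclidean_space"
  assumes d: "weakly_null_on T1 d"
    and t: "t \<in> {0..T1}"
  shows "(\<lambda>k. integral {0..t} (d k)) \<longlonglongrightarrow> 0"
proof (subst tendsto_componentwise_iff, intro ballI)
  note dint = weakly_null_onD(1)[OF d] and weak = weakly_null_onD(2)[OF d]
  fix b :: 'a assume b: "b \<in> Basis"
  have dI: "d k integrable_on {0..t}" for k
    using dint[of k] t by (auto simp: absolutely_integrable_on_def intro: integrable_on_subinterval)
  have "integral {0..T1} (\<lambda>s. d k s \<bullet> (indicator {0..t} s *\<^sub>R b)) = integral {0..t} (d k) \<bullet> b" for k
  proof -
    have "integral {0..T1} (\<lambda>s. d k s \<bullet> (indicator {0..t} s *\<^sub>R b))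
        = integral {0..T1} (\<lambda>s. if s \<in> {0..t} then d k s \<bullet> b else 0)"
      by (rule integral_cong) (auto simp: indicator_def)
    also have "\<dots> = integral {0..t} (\<lambda>s. d k s \<bullet> b)"
      using t by (subst integral_restrict_Int) (simp add: Int_absorb2)
    also have "\<dots> = integral {0..t} (d k) \<bullet> b" by (rule integral_component_eq[OF dI])
    finally show ?thesis .
  qed
  moreover have "(\<lambda>k. integral {0..T1} (\<lambda>s. d k s \<bullet> (indicator {0..t} s *\<^sub>R b))) \<longlonglongrightarrow> 0"
    using b by (intro weak borel_measurable_indicator_scaleR) (auto simp: indicator_def)
  ultimately show "(\<lambda>k. integral {0..t} (d k) \<bullet> b) \<longlonglongrightarrow> 0 \<bullet> b" by simp
qed

lemma concentration_point:
  fixes d :: "nat \<Rightarrow> real \<Rightarrow> 'a::euclidean_space"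
  assumes nEQ: "\<not> (\<exists>\<eta>>0. \<exists>K. \<forall>k\<ge>K. \<forall>a b. 0 \<le> a \<longrightarrow> a \<le> b \<longrightarrow> b \<le> T1 \<longrightarrow> b - a < \<eta> \<longrightarrow>
      norm (integral {a..b} (d k)) \<le> \<epsilon>)"
  shows "\<exists>t\<in>{0..T1}. \<forall>r>0. \<forall>K. \<exists>k\<ge>K. \<exists>a b. 0 \<le> a \<and> a \<le> b \<and> b \<le> T1 \<and> {a..b} \<subseteq> ball t r
      \<and> norm (integral {a..b} (d k)) > \<epsilon>"
proof (rule ccontr)
  assume "\<not> ?thesis"
  then have "\<forall>t\<in>{0..T1}. \<exists>r>0. \<exists>K. \<forall>k\<ge>K. \<forall>a b. 0 \<le> a \<longrightarrow> a \<le> b \<longrightarrow> b \<le> T1 \<longrightarrow> {a..b} \<subseteq> ball t r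
      \<longrightarrow> norm (integral {a..b} (d k)) \<le> \<epsilon>"
    unfolding not_less[symmetric] by meson
  then obtain R Kf where R: "\<And>t. t \<in> {0..T1} \<Longrightarrow> R t > 0"
    and RK: "\<And>t k a b. t \<in> {0..T1} \<Longrightarrow> k \<ge> Kf t \<Longrightarrow> 0 \<le> a \<Longrightarrow> a \<le> b \<Longrightarrow> b \<le> T1 \<Longrightarrow>
        {a..b} \<subseteq> ball t (R t) \<Longrightarrow> norm (integral {a..b} (d k)) \<le> \<epsilon>"
    by metis
  have "{0..T1} \<subseteq> (\<Union>t\<in>{0..T1}. ball t (R t))" using R by force
  then obtain C where C: "C \<subseteq> {0..T1}" "finite C" "{0..T1} \<subseteq> (\<Union>t\<in>C. ball t (R t))"
    using compactE_image[OF compact_Icc, of "{0..T1}" "\<lambda>t. ball t (R t)"] by blast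
  obtain \<eta> where \<eta>: "0 < \<eta>" and cov: "\<And>x. x \<in> {0..T1} \<Longrightarrow> \<exists>G\<in>(\<lambda>t. ball t (R t)) ` C. ball x \<eta> \<subseteq> G"
    by (rule Heine_Borel_lemma[OF compact_Icc C(3)]) auto
  define K where "K = Max (insert 0 (Kf ` C))"
  have "\<exists>\<eta>>0. \<exists>K. \<forall>k\<ge>K. \<forall>a b. 0 \<le> a \<longrightarrow> a \<le> b \<longrightarrow> b \<le> T1 \<longrightarrow> b - a < \<eta> \<longrightarrow>
      norm (integral {a..b} (d k)) \<le> \<epsilon>"
  proof (intro exI conjI allI impI)
    fix k a b assume k: "K \<le> k" and ab: "0 \<le> a" "a \<le> b" "b \<le> T1" "b - a < \<eta>"
    then obtain t where t: "t \<in> C" "ball a \<eta> \<subseteq> ball t (R t)" using cov[of a] by auto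
    have "{a..b} \<subseteq> ball a \<eta>" using ab by (auto simp: dist_real_def)
    moreover have "Kf t \<le> k" using k t C(2) unfolding K_def by (meson Max_ge finite_imageI finite_insert image_eqI insertCI le_trans)
    ultimately show "norm (integral {a..b} (d k)) \<le> \<epsilon>"
      using RK[of t k a b] t C(1) ab by auto
  qed (rule \<eta>)
  with nEQ show False by blast
qed

lemma integral_indicator_cball_small:
  fixes g :: "real \<Rightarrow> real"
  assumes g: "g integrable_on {0..T1}" and t: "t \<in> {0..T1}" and e: "e > 0"
  shows "\<exists>\<rho>>0. \<forall>r. 0 < r \<longrightarrow> r \<le> \<rho> \<longrightarrow> integral {0..T1} (\<lambda>s. indicator (cball t r) s * g s) \<le> e"
proof -
  define F where "F x = integral {0..x} g" for x
  have "continuous_on {0..T1} F" unfolding F_def by (rule indefinite_integral_continuous_1[OF g])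
  then obtain \<delta> where \<delta>: "\<delta> > 0" and F\<delta>: "\<And>x. x \<in> {0..T1} \<Longrightarrow> dist x t < \<delta> \<Longrightarrow> dist (F x) (F t) < e / 2"
    using t e unfolding continuous_on_iff by (metis half_gt_zero)
  show ?thesis
  proof (intro exI[of _ "\<delta>/2"] conjI allI impI)
    show "0 < \<delta> / 2" using \<delta> by simp
    fix r assume r: "0 < r" "r \<le> \<delta> / 2"
    define \<alpha> where "\<alpha> = max 0 (t - r)"
    define \<beta> where "\<beta> = min T1 (t + r)"
    have ab: "0 \<le> \<alpha>" "\<alpha> \<le> \<beta>" "\<beta> \<le> T1" using t r by (auto simp: \<alpha>_def \<beta>_def)
    have "integral {0..T1} (\<lambda>s. indicator (cball t r) s * g s) = integral {0..T1} (\<lambda>s. if s \<in> cball t r then g s else 0)"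
      by (rule integral_cong) (auto simp: indicator_def)
    also have "\<dots> = integral (cball t r \<inter> {0..T1}) g" by (rule integral_restrict_Int)
    also have "cball t r \<inter> {0..T1} = {\<alpha>..\<beta>}" by (auto simp: \<alpha>_def \<beta>_def dist_real_def)
    also have "integral {\<alpha>..\<beta>} g = F \<beta> - F \<alpha>"
    proof -
      have gi: "g integrable_on {0..\<beta>}" by (rule integrable_on_subinterval[OF g]) (use ab in auto)
      have "integral {0..\<alpha>} g + integral {\<alpha>..\<beta>} g = integral {0..\<beta>} g"
        using Henstock_Kurzweil_Integration.integral_combine[OF ab(1) ab(2) gi] ab gi by auto
      then show ?thesis unfolding F_def by simp
    qed
    also have "\<dots> \<le> dist (F \<beta>) (F t) + dist (F \<alpha>) (F t)" by (simp add: dist_real_def)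
    also have "\<dots> < e / 2 + e / 2"
      using ab r t by (intro add_strict_mono F\<delta>) (auto simp: \<alpha>_def \<beta>_def dist_real_def)
    finally show "integral {0..T1} (\<lambda>s. indicator (cball t r) s * g s) \<le> e" by simp
  qed
qed

lemma integrable_indicator_norm:
  fixes d :: "real \<Rightarrow> 'a::euclidean_space"
  assumes d: "d absolutely_integrable_on {0..T1}" and X: "X \<in> sets borel"
  shows "(\<lambda>s. indicator X s * norm (d s)) integrable_on {0..T1}"
proof -
  have "(\<lambda>s. d s \<bullet> (indicator X s *\<^sub>R (d s /\<^sub>R norm (d s)))) absolutely_integrable_on {0..T1}"
  proof (rule absolutely_integrable_inner_bounded[OF d])
    show "(\<lambda>s. indicator X s *\<^sub>R (d s /\<^sub>R norm (d s))) \<in> borel_measurable (lebesgue_on {0..T1})"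
      using absolutely_integrable_imp_borel_measurable[OF d] X borel_measurable_lebesgue_on_borel[of "indicator X"]
      by (intro borel_measurable_scaleR borel_measurable_norm) (auto simp: borel_measurable_indicator)
    show "norm (indicator X s *\<^sub>R (d s /\<^sub>R norm (d s))) \<le> 1" for s
      using left_inverse[of "norm (d s)"] by (cases "d s = 0") (auto simp: indicator_def)
  qed
  moreover have "(\<lambda>s. d s \<bullet> (indicator X s *\<^sub>R (d s /\<^sub>R norm (d s)))) = (\<lambda>s. indicator X s * norm (d s))"
  proof
    fix s show "d s \<bullet> (indicator X s *\<^sub>R (d s /\<^sub>R norm (d s))) = indicator X s * norm (d s)"
      by (cases "d s = 0") (auto simp: indicator_def dot_square_norm power2_eq_square)
  qed
  ultimately show ?thesis unfolding absolutely_integrable_on_def by metis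
qed

lemma gliding_hump_step:
  fixes d :: "nat \<Rightarrow> real \<Rightarrow> 'a::euclidean_space"
  assumes d: "weakly_null_on T1 d"
    and eps: "\<epsilon> > 0" and t: "t \<in> {0..T1}"
    and bad: "\<forall>r>0. \<forall>K. \<exists>k\<ge>K. \<exists>a b. 0 \<le> a \<and> a \<le> b \<and> b \<le> T1 \<and> {a..b} \<subseteq> ball t r
      \<and> norm (integral {a..b} (d k)) > \<epsilon>"
    and r: "0 < r" and hm: "h \<in> borel_measurable (lebesgue_on {0..T1})"
    and hb: "\<forall>s. norm (h s) \<le> 1" and hz: "\<forall>s\<in>cball t r. h s = 0"
  shows "\<exists>h' r'. 0 < r' \<and> r' \<le> r/2 \<and> h' \<in> borel_measurable (lebesgue_on {0..T1}) \<and> (\<forall>s. norm (h' s) \<le> 1)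
     \<and> (\<forall>s\<in>cball t r'. h' s = 0) \<and> (\<forall>s. s \<notin> cball t r \<longrightarrow> h' s = h s)
     \<and> (\<exists>k\<ge>p. integral {0..T1} (\<lambda>s. d k s \<bullet> h' s) \<ge> 3/4*\<epsilon>
         \<and> integral {0..T1} (\<lambda>s. indicator (cball t r') s * norm (d k s)) \<le> \<epsilon>/8)"
proof -
  note dint = weakly_null_onD(1)[OF d] and weak = weakly_null_onD(2)[OF d]
  obtain K0 where K0: "\<And>k. k \<ge> K0 \<Longrightarrow> norm (integral {0..T1} (\<lambda>s. d k s \<bullet> h s) - 0) < \<epsilon>/8"
    using LIMSEQ_D[OF weak[OF hm] , of "\<epsilon>/8"] hb eps by auto
  obtain k a b where k: "k \<ge> max p K0" and ab: "0 \<le> a" "a \<le> b" "b \<le> T1" "{a..b} \<subseteq> ball t r"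
    and big: "norm (integral {a..b} (d k)) > \<epsilon>"
    using bad r by blast
  define v where "v = integral {a..b} (d k)"
  define c where "c = v /\<^sub>R norm v"
  have vpos: "norm v > 0" unfolding v_def using big eps by linarith
  have nc: "norm c = 1" using vpos by (simp add: c_def)
  have vc: "v \<bullet> c = norm v" using vpos by (simp add: c_def dot_square_norm power2_eq_square)
  have dm: "d k \<in> borel_measurable (lebesgue_on {0..T1})"
    by (rule absolutely_integrable_imp_borel_measurable[OF dint]) auto
  have nd: "(\<lambda>s. norm (d k s)) integrable_on {0..T1}" using dint[of k] by (simp add: absolutely_integrable_on_def)
  obtain \<rho> where \<rho>: "\<rho> > 0" and \<rho>s: "\<And>r'. 0 < r' \<Longrightarrow> r' \<le> \<rho> \<Longrightarrow>
      integral {0..T1} (\<lambda>s. indicator (cball t r') s * norm (d k s)) \<le> \<epsilon>/8"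
    using integral_indicator_cball_small[OF nd t, of "\<epsilon>/8"] eps by auto
  define r' where "r' = min \<rho> (r/2)"
  have r': "0 < r'" "r' \<le> r/2" "r' \<le> \<rho>" using \<rho> r by (auto simp: r'_def)
  define X where "X = {a..b} \<inter> cball t r'"
  define h' where "h' s = h s + indicator {a..b} s *\<^sub>R c - indicator X s *\<^sub>R c" for s
  have sub1: "{a..b} \<subseteq> cball t r" using ab(4) by auto
  have indc: "\<And>Y. Y \<in> sets borel \<Longrightarrow> norm (indicator Y s *\<^sub>R c) \<le> 1" for s using nc by (auto simp: indicator_def)
  have h'_out: "h' s = h s" if "s \<notin> cball t r" for s
    using that sub1 by (auto simp: h'_def X_def indicator_def)
  have h'_in: "h' s = indicator {a..b} s *\<^sub>R c - indicator X s *\<^sub>R c" if "s \<in> cball t r" for s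
    using that hz by (simp add: h'_def)
  have h'_norm: "norm (h' s) \<le> 1" for s
  proof (cases "s \<in> cball t r")
    case True
    then show ?thesis using h'_in[OF True] nc by (auto simp: indicator_def X_def)
  next
    case False
    then show ?thesis using h'_out hb by simp
  qed
  have h'_zero: "h' s = 0" if "s \<in> cball t r'" for s
  proof -
    have "s \<in> cball t r" using that r' by auto
    then show ?thesis using h'_in that by (auto simp: indicator_def X_def)
  qed
  have h'm: "h' \<in> borel_measurable (lebesgue_on {0..T1})"
    unfolding h'_def X_def using hm
    by (intro borel_measurable_add borel_measurable_diff borel_measurable_indicator_scaleR) auto
  have i1: "(\<lambda>s. d k s \<bullet> h s) absolutely_integrable_on {0..T1}"
    by (rule absolutely_integrable_inner_bounded[OF dint hm]) (use hb in auto)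
  have i2: "(\<lambda>s. d k s \<bullet> (indicator Y s *\<^sub>R c)) absolutely_integrable_on {0..T1}" if "Y \<in> sets borel" for Y
    by (rule absolutely_integrable_inner_bounded[OF dint borel_measurable_indicator_scaleR]) (use that indc in auto)
  have XB: "X \<in> sets borel" by (simp add: X_def)
  have "integral {0..T1} (\<lambda>s. d k s \<bullet> h' s) = integral {0..T1} (\<lambda>s. d k s \<bullet> h s)
      + integral {0..T1} (\<lambda>s. d k s \<bullet> (indicator {a..b} s *\<^sub>R c))
      - integral {0..T1} (\<lambda>s. d k s \<bullet> (indicator X s *\<^sub>R c))"
  proof -
    have "integral {0..T1} (\<lambda>s. d k s \<bullet> h' s) = integral {0..T1} (\<lambda>s. d k s \<bullet> h s
       + d k s \<bullet> (indicator {a..b} s *\<^sub>R c) - d k s \<bullet> (indicator X s *\<^sub>R c))"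
      by (simp add: h'_def inner_add_right inner_diff_right)
    show ?thesis
      using i1 i2[of "{a..b}"] i2[OF XB] \<open>integral {0..T1} (\<lambda>s. d k s \<bullet> h' s) = _\<close>
      by (simp add: integral_add integral_diff absolutely_integrable_on_def integrable_add integrable_diff)
  qed
  moreover have "integral {0..T1} (\<lambda>s. d k s \<bullet> (indicator {a..b} s *\<^sub>R c)) = norm v"
  proof -
    have dI: "d k integrable_on {a..b}"
      using dint[of k] ab by (auto simp: absolutely_integrable_on_def intro: integrable_on_subinterval)
    have "integral {0..T1} (\<lambda>s. d k s \<bullet> (indicator {a..b} s *\<^sub>R c))
        = integral {0..T1} (\<lambda>s. if s \<in> {a..b} then d k s \<bullet> c else 0)"
      by (rule integral_cong) (auto simp: indicator_def)
    also have "\<dots> = integral {a..b} (\<lambda>s. d k s \<bullet> c)"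
      using ab by (subst integral_restrict_Int) (simp add: Int_absorb2)
    also have "\<dots> = v \<bullet> c" unfolding v_def by (rule integral_component_eq[OF dI])
    finally show ?thesis using vc by simp
  qed
  moreover have "norm (integral {0..T1} (\<lambda>s. d k s \<bullet> (indicator X s *\<^sub>R c))) \<le> \<epsilon>/8"
  proof -
    have "norm (integral {0..T1} (\<lambda>s. d k s \<bullet> (indicator X s *\<^sub>R c)))
        \<le> integral {0..T1} (\<lambda>s. indicator (cball t r') s * norm (d k s))"
    proof (rule integral_norm_bound_integral)
      show "(\<lambda>s. d k s \<bullet> (indicator X s *\<^sub>R c)) integrable_on {0..T1}"
        using i2[OF XB] by (simp add: absolutely_integrable_on_def)
      show "(\<lambda>s. indicator (cball t r') s * norm (d k s)) integrable_on {0..T1}"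
        by (rule integrable_indicator_norm[OF dint]) simp
      fix s
      have "norm (d k s \<bullet> c) \<le> norm (d k s)" using Cauchy_Schwarz_ineq2[of "d k s" c] nc by simp
      then show "norm (d k s \<bullet> (indicator X s *\<^sub>R c)) \<le> indicator (cball t r') s * norm (d k s)"
        by (auto simp: indicator_def X_def)
    qed
    also have "\<dots> \<le> \<epsilon>/8" by (rule \<rho>s) (use r' in auto)
    finally show ?thesis .
  qed
  moreover have "norm (integral {0..T1} (\<lambda>s. d k s \<bullet> h s)) < \<epsilon>/8" using K0[of k] k by simp
  ultimately have main: "integral {0..T1} (\<lambda>s. d k s \<bullet> h' s) \<ge> 3/4*\<epsilon>"
    using big unfolding v_def[symmetric] by (simp add: abs_le_iff abs_less_iff)
  show ?thesis
    using r' h'm h'_norm h'_zero h'_out main k \<rho>s[OF r'(1) r'(3)] by (intro exI[of _ h'] exI[of _ r']) auto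
qed

lemma shrinking_hump_limit:
  fixes hs :: "nat \<Rightarrow> real \<Rightarrow> 'a::euclidean_space"
  assumes rpos: "\<And>p. 0 < rs p" and rsm: "\<And>p. rs p \<le> (1/2)^p" and rsS: "\<And>p. rs (Suc p) \<le> rs p"
    and hsm: "\<And>p. hs p \<in> borel_measurable (lebesgue_on S)" and hsb: "\<And>p s. norm (hs p s) \<le> 1"
    and hs0: "\<And>p s. s \<in> cball t (rs p) \<Longrightarrow> hs p s = 0"
    and hsS: "\<And>p s. s \<notin> cball t (rs p) \<Longrightarrow> hs (Suc p) s = hs p s"
  shows "\<exists>H. H \<in> borel_measurable (lebesgue_on S) \<and> (\<forall>s. norm (H s) \<le> 1)
    \<and> (\<forall>p s. s \<notin> cball t (rs p) \<longrightarrow> H s = hs p s)"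
proof -
  have rsmono: "rs q \<le> rs p" if "p \<le> q" for p q
    using that by (induction q rule: dec_induct) (auto intro: order_trans[OF rsS])
  have F1: "hs q s = hs p s" if "p \<le> q" "s \<notin> cball t (rs p)" for p q s
    using that(1)
  proof (induction q rule: dec_induct)
    case (step q)
    have "s \<notin> cball t (rs q)" using that(2) rsmono[OF step(1)] by auto
    then show ?case using hsS step by simp
  qed simp
  have exN: "\<exists>p. (1/2::real)^p < dist s t" if "s \<noteq> t" for s
    using real_arch_pow_inv[of "dist s t" "1/2"] that by auto
  define N where "N s = (LEAST p. (1/2::real)^p < dist s t)" for s
  have Nprop: "(1/2::real)^(N s) < dist s t" if "s \<noteq> t" for s
    unfolding N_def using LeastI_ex[OF exN[OF that]] .
  have notin: "s \<notin> cball t (rs q)" if "s \<noteq> t" "N s \<le> q" for s q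
    using Nprop[OF that(1)] rsm[of q] rsmono[OF that(2)] rsm[of "N s"] by (auto simp: dist_commute)
  define H where "H s = (if s = t then 0 else hs (N s) s)" for s
  have Hev: "H s = hs p s" if "s \<notin> cball t (rs p)" for s p
  proof -
    have st: "s \<noteq> t" using that rpos[of p] by auto
    have "hs (max p (N s)) s = hs (N s) s" by (rule F1) (use notin[OF st] in auto)
    moreover have "hs (max p (N s)) s = hs p s" by (rule F1) (use that in auto)
    ultimately show ?thesis using st by (simp add: H_def)
  qed
  have Hlim: "(\<lambda>p. hs p s) \<longlonglongrightarrow> H s" for s
  proof (cases "s = t")
    case True
    then have "hs p s = 0" for p using hs0[of s p] rpos[of p] by auto
    then show ?thesis using True by (simp add: H_def)
  next
    case False
    have "eventually (\<lambda>p. hs p s = H s) sequentially"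
      unfolding eventually_sequentially
    proof (intro exI allI impI)
      fix p assume "N s \<le> p"
      then show "hs p s = H s" using Hev[OF notin[OF False]] by simp
    qed
    then show ?thesis by (rule tendsto_eventually)
  qed
  have "H \<in> borel_measurable (lebesgue_on S)"
    by (rule borel_measurable_LIMSEQ_metric[OF hsm Hlim])
  moreover have "norm (H s) \<le> 1" for s by (simp add: H_def hsb)
  ultimately show ?thesis using Hev by blast
qed

lemma integral_inner_ge_outside:
  fixes d :: "real \<Rightarrow> 'a::euclidean_space"
  assumes d: "d absolutely_integrable_on {0..T1}" and C: "C \<in> sets borel"
    and hm: "h \<in> borel_measurable (lebesgue_on {0..T1})" and hb: "\<And>s. norm (h s) \<le> 1"
    and h0: "\<And>s. s \<in> C \<Longrightarrow> h s = 0"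
    and Hm: "H \<in> borel_measurable (lebesgue_on {0..T1})" and Hb: "\<And>s. norm (H s) \<le> 1"
    and Hh: "\<And>s. s \<notin> C \<Longrightarrow> H s = h s"
  shows "integral {0..T1} (\<lambda>s. d s \<bullet> H s)
    \<ge> integral {0..T1} (\<lambda>s. d s \<bullet> h s) - integral {0..T1} (\<lambda>s. indicator C s * norm (d s))"
proof -
  have split: "d s \<bullet> H s = d s \<bullet> h s + d s \<bullet> (indicator C s *\<^sub>R H s)" for s
    using h0[of s] Hh[of s] by (cases "s \<in> C") auto
  have m2: "(\<lambda>s. indicator C s *\<^sub>R H s) \<in> borel_measurable (lebesgue_on {0..T1})"
    by (rule borel_measurable_scaleR[OF borel_measurable_lebesgue_on_borel[OF borel_measurable_indicator] Hm])
      (rule C)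
  have i1: "(\<lambda>s. d s \<bullet> h s) absolutely_integrable_on {0..T1}"
    by (rule absolutely_integrable_inner_bounded[OF d hm hb])
  have i2: "(\<lambda>s. d s \<bullet> (indicator C s *\<^sub>R H s)) absolutely_integrable_on {0..T1}"
    by (rule absolutely_integrable_inner_bounded[OF d m2]) (auto simp: indicator_def Hb)
  have "integral {0..T1} (\<lambda>s. d s \<bullet> H s) = integral {0..T1} (\<lambda>s. d s \<bullet> h s)
      + integral {0..T1} (\<lambda>s. d s \<bullet> (indicator C s *\<^sub>R H s))"
    unfolding split using i1 i2 by (simp add: integral_add absolutely_integrable_on_def)
  moreover have "norm (integral {0..T1} (\<lambda>s. d s \<bullet> (indicator C s *\<^sub>R H s)))
      \<le> integral {0..T1} (\<lambda>s. indicator C s * norm (d s))"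
  proof (rule integral_norm_bound_integral)
    show "(\<lambda>s. d s \<bullet> (indicator C s *\<^sub>R H s)) integrable_on {0..T1}"
      using i2 by (simp add: absolutely_integrable_on_def)
    show "(\<lambda>s. indicator C s * norm (d s)) integrable_on {0..T1}"
      by (rule integrable_indicator_norm[OF d C])
    fix s
    have "norm (d s \<bullet> H s) \<le> norm (d s) * norm (H s)" by (simp add: Cauchy_Schwarz_ineq2)
    also have "\<dots> \<le> norm (d s)" using Hb[of s] by (simp add: mult_left_le)
    finally show "norm (d s \<bullet> (indicator C s *\<^sub>R H s)) \<le> indicator C s * norm (d s)"
      by (auto simp: indicator_def)
  qed
  ultimately show ?thesis by (simp add: abs_le_iff)
qed

text \<open>Gliding hump: if integrals over short intervals were not uniformly small, the bad intervals
  would concentrate at some point t, and gluing ever smaller humps around t, each aligned with a bad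
  integral, would give one bounded test function against which d k does not tend to 0.\<close>

lemma weakly_null_equi_small:
  fixes d :: "nat \<Rightarrow> real \<Rightarrow> 'a::euclidean_space"
  assumes d: "weakly_null_on T1 d"
    and eps: "\<epsilon> > 0"
  shows "\<exists>\<eta>>0. \<exists>K. \<forall>k\<ge>K. \<forall>a b. 0 \<le> a \<longrightarrow> a \<le> b \<longrightarrow> b \<le> T1 \<longrightarrow> b - a < \<eta> \<longrightarrow>
      norm (integral {a..b} (d k)) \<le> \<epsilon>"
proof (rule ccontr)
  note dint = weakly_null_onD(1)[OF d] and weak = weakly_null_onD(2)[OF d]
  assume nEQ: "\<not> ?thesis"
  obtain t where t: "t \<in> {0..T1}" and bad: "\<forall>r>0. \<forall>K. \<exists>k\<ge>K. \<exists>a b. 0 \<le> a \<and> a \<le> b \<and> b \<le> T1 \<and> {a..b} \<subseteq> ball t r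
      \<and> norm (integral {a..b} (d k)) > \<epsilon>"
    using concentration_point[OF nEQ] by (elim bexE) (rule that)
  define P where "P p x \<longleftrightarrow> (0 < snd x \<and> snd x \<le> (1/2)^p \<and> fst x \<in> borel_measurable (lebesgue_on {0..T1})
     \<and> (\<forall>s. norm (fst x s) \<le> 1) \<and> (\<forall>s\<in>cball t (snd x). fst x s = 0))" for p and x :: "(real \<Rightarrow> 'a) \<times> real"
  define Q where "Q p x y \<longleftrightarrow> snd y \<le> snd x \<and> (\<forall>s. s \<notin> cball t (snd x) \<longrightarrow> fst y s = fst x s)
     \<and> (\<exists>k\<ge>p. integral {0..T1} (\<lambda>s. d k s \<bullet> fst y s) \<ge> 3/4*\<epsilon>
         \<and> integral {0..T1} (\<lambda>s. indicator (cball t (snd y)) s * norm (d k s)) \<le> \<epsilon>/8)"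
    for p and x y :: "(real \<Rightarrow> 'a) \<times> real"
  have "\<exists>f. \<forall>p. P p (f p) \<and> Q p (f p) (f (Suc p))"
  proof (rule dependent_nat_choice)
    show "\<exists>x. P 0 x" by (intro exI[of _ "(\<lambda>_. 0, 1)"]) (simp add: P_def)
  next
    fix x p assume Px: "P p x"
    then obtain h' r' where A: "0 < r'" "r' \<le> snd x / 2" "h' \<in> borel_measurable (lebesgue_on {0..T1})"
      "\<forall>s. norm (h' s) \<le> 1" "\<forall>s\<in>cball t r'. h' s = 0" "\<forall>s. s \<notin> cball t (snd x) \<longrightarrow> h' s = fst x s"
      "\<exists>k\<ge>p. integral {0..T1} (\<lambda>s. d k s \<bullet> h' s) \<ge> 3/4*\<epsilon>
         \<and> integral {0..T1} (\<lambda>s. indicator (cball t r') s * norm (d k s)) \<le> \<epsilon>/8"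
      using gliding_hump_step[OF d eps t bad, of "snd x" "fst x" p] unfolding P_def by blast
    show "\<exists>y. P (Suc p) y \<and> Q p x y"
      using A Px unfolding P_def Q_def by (intro exI[of _ "(h', r')"]) auto
  qed
  then obtain f where f: "\<And>p. P p (f p)" "\<And>p. Q p (f p) (f (Suc p))" by blast
  define hs where "hs p = fst (f p)" for p
  define rs where "rs p = snd (f p)" for p
  have rpos: "0 < rs p" and rsm: "rs p \<le> (1/2)^p" and hsm: "hs p \<in> borel_measurable (lebesgue_on {0..T1})"
    and hsb: "norm (hs p s) \<le> 1" and hs0: "\<And>s. s \<in> cball t (rs p) \<Longrightarrow> hs p s = 0" for p s
    using f(1)[of p] unfolding P_def hs_def rs_def by auto
  have rsS: "rs (Suc p) \<le> rs p" and hsS: "\<And>s. s \<notin> cball t (rs p) \<Longrightarrow> hs (Suc p) s = hs p s" for p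
    using f(2)[of p] unfolding Q_def hs_def rs_def by auto
  obtain H where Hm: "H \<in> borel_measurable (lebesgue_on {0..T1})" and Hb: "\<And>s. norm (H s) \<le> 1"
    and Hev: "\<And>s p. s \<notin> cball t (rs p) \<Longrightarrow> H s = hs p s"
    using shrinking_hump_limit[where rs = rs and hs = hs and t = t, OF rpos rsm rsS hsm hsb hs0 hsS] by blast
  obtain kf where kf: "\<And>p. kf p \<ge> p" "\<And>p. integral {0..T1} (\<lambda>s. d (kf p) s \<bullet> hs (Suc p) s) \<ge> 3/4*\<epsilon>"
    "\<And>p. integral {0..T1} (\<lambda>s. indicator (cball t (rs (Suc p))) s * norm (d (kf p) s)) \<le> \<epsilon>/8"
  proof -
    have ex: "\<forall>p. \<exists>k. k \<ge> p \<and> integral {0..T1} (\<lambda>s. d k s \<bullet> hs (Suc p) s) \<ge> 3/4*\<epsilon>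
      \<and> integral {0..T1} (\<lambda>s. indicator (cball t (rs (Suc p))) s * norm (d k s)) \<le> \<epsilon>/8"
      using f(2) unfolding Q_def hs_def rs_def by blast
    obtain kf where "\<forall>p. kf p \<ge> p \<and> integral {0..T1} (\<lambda>s. d (kf p) s \<bullet> hs (Suc p) s) \<ge> 3/4*\<epsilon>
      \<and> integral {0..T1} (\<lambda>s. indicator (cball t (rs (Suc p))) s * norm (d (kf p) s)) \<le> \<epsilon>/8"
      using choice[OF ex] by blast
    then show ?thesis using that by blast
  qed
  have key: "integral {0..T1} (\<lambda>s. d (kf p) s \<bullet> H s) \<ge> 5/8*\<epsilon>" for p
  proof -
    have "integral {0..T1} (\<lambda>s. d (kf p) s \<bullet> H s) \<ge> integral {0..T1} (\<lambda>s. d (kf p) s \<bullet> hs (Suc p) s)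
        - integral {0..T1} (\<lambda>s. indicator (cball t (rs (Suc p))) s * norm (d (kf p) s))"
      by (rule integral_inner_ge_outside[OF dint _ hsm hsb hs0 Hm Hb Hev]) simp
    then show ?thesis using kf(2)[of p] kf(3)[of p] by linarith
  qed
  obtain N0 where N0: "\<And>k. k \<ge> N0 \<Longrightarrow> norm (integral {0..T1} (\<lambda>s. d k s \<bullet> H s) - 0) < \<epsilon>/2"
    using LIMSEQ_D[OF weak[OF Hm Hb], of "\<epsilon>/2"] eps by auto
  show False using N0[OF kf(1)[of N0]] key[of N0] eps by simp
qed

lemma weakly_null_primitives_uniformly_small:
  fixes d :: "nat \<Rightarrow> real \<Rightarrow> 'a::euclidean_space"
  assumes d: "weakly_null_on T1 d"
    and eps: "\<epsilon> > 0" and T1: "T1 > 0"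
  shows "\<exists>K. \<forall>k\<ge>K. \<forall>t\<in>{0..T1}. norm (integral {0..t} (d k)) \<le> \<epsilon>"
proof -
  note dint = weakly_null_onD(1)[OF d] and weak = weakly_null_onD(2)[OF d]
  have E: "\<exists>\<eta>>0. \<exists>K. \<forall>k\<ge>K. \<forall>a b. 0 \<le> a \<longrightarrow> a \<le> b \<longrightarrow> b \<le> T1 \<longrightarrow> b - a < \<eta> \<longrightarrow>
      norm (integral {a..b} (d k)) \<le> \<epsilon>/2"
    by (rule weakly_null_equi_small[OF d]) (use eps in simp_all)
  obtain \<eta> K1 where \<eta>: "\<eta> > 0" and K1: "\<And>k a b. k \<ge> K1 \<Longrightarrow> 0 \<le> a \<Longrightarrow> a \<le> b \<Longrightarrow> b \<le> T1 \<Longrightarrow> b - a < \<eta> \<Longrightarrow>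
      norm (integral {a..b} (d k)) \<le> \<epsilon>/2"
    using E by blast
  obtain M :: nat where M: "T1 / \<eta> < M" using reals_Archimedean2 by blast
  have "0 < T1 / \<eta>" using T1 \<eta> by simp
  then have "0 < real M" using M by linarith
  then have Mpos: "M > 0" by simp
  have step: "T1 / M < \<eta>" using M Mpos \<eta> T1 by (simp add: field_simps)
  define g where "g j = real j * T1 / M" for j :: nat
  have gin: "g j \<in> {0..T1}" if "j \<le> M" for j
    using that T1 Mpos by (auto simp: g_def field_simps)
  have ev: "eventually (\<lambda>k. \<forall>j\<in>{..M}. norm (integral {0..g j} (d k)) < \<epsilon>/2) sequentially"
  proof (rule eventually_ball_finite)
    show "\<forall>j\<in>{..M}. eventually (\<lambda>k. norm (integral {0..g j} (d k)) < \<epsilon>/2) sequentially"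
    proof
      fix j assume "j \<in> {..M}"
      then have "(\<lambda>k. integral {0..g j} (d k)) \<longlonglongrightarrow> 0"
        using gin by (intro weakly_null_primitive_tendsto_0[OF d]) auto
      then show "eventually (\<lambda>k. norm (integral {0..g j} (d k)) < \<epsilon>/2) sequentially"
        by (rule order_tendstoD(2)[OF tendsto_norm_zero]) (use eps in simp)
    qed
  qed simp
  then obtain K2 where K2: "\<And>k j. k \<ge> K2 \<Longrightarrow> j \<le> M \<Longrightarrow> norm (integral {0..g j} (d k)) < \<epsilon>/2"
    unfolding eventually_sequentially by auto
  show ?thesis
  proof (intro exI[of _ "max K1 K2"] allI impI ballI)
    fix k t assume k: "max K1 K2 \<le> k" and t: "t \<in> {0..T1}"
    define j where "j = min M (nat \<lfloor>t * M / T1\<rfloor>)"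
    have jM: "j \<le> M" by (simp add: j_def)
    have gt: "g j \<le> t"
    proof -
      have fl: "real (nat \<lfloor>t * M / T1\<rfloor>) \<le> t * M / T1"
        using t T1 by (simp add: of_nat_nat)
      have "j \<le> nat \<lfloor>t * M / T1\<rfloor>" by (simp add: j_def)
      then have "real j \<le> real (nat \<lfloor>t * M / T1\<rfloor>)" by linarith
      then have "real j \<le> t * M / T1" using fl by linarith
      then show ?thesis using T1 Mpos by (simp add: g_def field_simps)
    qed
    have tg: "t - g j < \<eta>"
    proof (cases "nat \<lfloor>t * M / T1\<rfloor> \<le> M")
      case True
      then have j: "j = nat \<lfloor>t * M / T1\<rfloor>" by (simp add: j_def)
      have "t * M / T1 < real j + 1" using t T1 Mpos j by linarith
      then have "t < (real j + 1) * T1 / M" using T1 Mpos by (simp add: field_simps)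
      then have "t - g j < T1 / M" by (simp add: g_def add_divide_distrib distrib_right)
      then show ?thesis using step by linarith
    next
      case False
      then have "t * M / T1 \<ge> M" by linarith
      then have "t \<ge> T1" using T1 Mpos by (simp add: field_simps)
      then have "t = T1" "j = M" using t False by (auto simp: j_def)
      then show ?thesis using Mpos \<eta> by (simp add: g_def)
    qed
    have dI: "d k integrable_on {0..t}"
      using dint[of k] t by (auto simp: absolutely_integrable_on_def intro: integrable_on_subinterval)
    have "integral {0..t} (d k) = integral {0..g j} (d k) + integral {g j..t} (d k)"
      using Henstock_Kurzweil_Integration.integral_combine[of 0 "g j" t "d k"] gin[OF jM] gt dI by auto
    then have "norm (integral {0..t} (d k)) \<le> norm (integral {0..g j} (d k)) + norm (integral {g j..t} (d k))"
      by (simp add: norm_triangle_ineq)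
    also have "\<dots> \<le> \<epsilon>/2 + \<epsilon>/2"
      using K2[of k j] jM k K1[of k "g j" t] gin[OF jM] gt tg t by (intro add_mono) auto
    finally show "norm (integral {0..t} (d k)) \<le> \<epsilon>" by simp
  qed
qed

lemma in_L2_imp_absolutely_integrable:
  fixes g :: "real \<Rightarrow> real^'n"
  assumes "in_L2 {a..b} g"
  shows "g absolutely_integrable_on {a..b}"
proof (rule measurable_bounded_by_integrable_imp_absolutely_integrable)
  show "g \<in> borel_measurable (lebesgue_on {a..b})" using assms by (simp add: in_L2_def)
  show "(\<lambda>s. 1 + norm (g s) ^ 2) integrable_on {a..b}"
    using assms by (intro integrable_add integrable_const_ivl) (simp add: in_L2_def)
  fix s
  have "x \<le> 1 + x ^ 2" for x :: real
  proof (cases "x \<le> 1")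
    case True then show ?thesis using zero_le_power2[of x] by linarith
  next
    case False
    then have "x * 1 \<le> x * x" by (intro mult_left_mono) auto
    then show ?thesis by (simp add: power2_eq_square)
  qed
  then show "norm (g s) \<le> 1 + norm (g s) ^ 2" .
qed auto

lemma bounded_measurable_in_L2:
  fixes h :: "real \<Rightarrow> real^'n"
  assumes hm: "h \<in> borel_measurable (lebesgue_on {a..b})" and hb: "\<And>s. norm (h s) \<le> 1"
  shows "in_L2 {a..b} h"
  unfolding in_L2_def
proof
  show "h \<in> borel_measurable (lebesgue_on {a..b})" by (rule hm)
  show "(\<lambda>s. norm (h s) ^ 2) integrable_on {a..b}"
  proof (rule measurable_bounded_by_integrable_imp_integrable)
    show "(\<lambda>s. norm (h s) ^ 2) \<in> borel_measurable (lebesgue_on {a..b})"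
      by (intro borel_measurable_power measurable_compose[OF hm borel_measurable_norm])
    show "(\<lambda>s. 1::real) integrable_on {a..b}" by (rule integrable_const_ivl)
    fix s show "norm (norm (h s) ^ 2) \<le> 1"
      using hb[of s] by (simp add: power_le_one)
  qed auto
qed

lemma weakly_L2_imp_weakly_null_on:
  fixes F :: "nat \<Rightarrow> real \<Rightarrow> real^'n"
  assumes weak: "weakly_L2 {0..T1} F g"
  shows "weakly_null_on T1 (\<lambda>k s. F k s - g s)"
proof -
  have Fi: "F k absolutely_integrable_on {0..T1}" and gi: "g absolutely_integrable_on {0..T1}" for k
    using weak by (auto simp: weakly_L2_def intro: in_L2_imp_absolutely_integrable)
  have "(\<lambda>k. integral {0..T1} (\<lambda>s. (F k s - g s) \<bullet> h s)) \<longlonglongrightarrow> 0"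
    if hm: "h \<in> borel_measurable (lebesgue_on {0..T1})" and hb: "\<And>s. norm (h s) \<le> 1" for h
  proof -
    have lim: "(\<lambda>k. integral {0..T1} (\<lambda>s. F k s \<bullet> h s)) \<longlonglongrightarrow> integral {0..T1} (\<lambda>s. g s \<bullet> h s)"
      using weak bounded_measurable_in_L2[OF hm hb] unfolding weakly_L2_def by auto
    have "integral {0..T1} (\<lambda>s. (F k s - g s) \<bullet> h s)
        = integral {0..T1} (\<lambda>s. F k s \<bullet> h s) - integral {0..T1} (\<lambda>s. g s \<bullet> h s)" for k
      using absolutely_integrable_inner_bounded[OF Fi hm hb] absolutely_integrable_inner_bounded[OF gi hm hb]
      by (simp add: inner_diff_left integral_diff absolutely_integrable_on_def)
    then show ?thesis using tendsto_diff[OF lim tendsto_const, of "integral {0..T1} (\<lambda>s. g s \<bullet> h s)"] by simp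
  qed
  moreover have "(\<lambda>s. F k s - g s) absolutely_integrable_on {0..T1}" for k
    using Fi gi by (rule set_integral_diff(1))
  ultimately show ?thesis unfolding weakly_null_on_def by blast
qed

section \<open>The state-dependent part of the right-hand side\<close>

lemma lipschitz_of_derivative_bound:
  fixes \<phi> \<phi>' :: "real \<Rightarrow> real"
  assumes der: "\<And>r. r \<ge> 0 \<Longrightarrow> (\<phi> has_real_derivative \<phi>' r) (at r within {0..})"
    and bd: "\<And>r. r \<in> {0..M} \<Longrightarrow> \<bar>\<phi>' r\<bar> \<le> B"
  shows "r \<in> {0..M} \<Longrightarrow> s \<in> {0..M} \<Longrightarrow> \<bar>\<phi> r - \<phi> s\<bar> \<le> B * \<bar>r - s\<bar>"
proof -
  have main: "\<bar>\<phi> r - \<phi> s\<bar> \<le> B * \<bar>r - s\<bar>" if rs: "s \<le> r" "r \<in> {0..M}" "s \<in> {0..M}" for r s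
  proof -
    have "\<exists>x\<in>{s..r}. \<phi> r - \<phi> s = (\<lambda>h. \<phi>' x * h) (r - s)"
    proof (rule mvt_very_simple[OF rs(1)])
      fix x assume x: "s \<le> x" "x \<le> r"
      have "(\<phi> has_real_derivative \<phi>' x) (at x within {0..})" using der x rs by auto
      then have "(\<phi> has_real_derivative \<phi>' x) (at x within {s..r})"
        by (rule DERIV_subset) (use rs in auto)
      then show "(\<phi> has_derivative (\<lambda>h. \<phi>' x * h)) (at x within {s..r})"
        by (simp add: has_field_derivative_def)
    qed
    then obtain x where x: "x \<in> {s..r}" "\<phi> r - \<phi> s = \<phi>' x * (r - s)" by auto
    have "\<bar>\<phi>' x\<bar> \<le> B" using bd x rs by auto
    then show ?thesis using x rs by (simp add: abs_mult mult_right_mono)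
  qed
  assume "r \<in> {0..M}" "s \<in> {0..M}"
  then show ?thesis using main[of s r] main[of r s] by (cases "s \<le> r") (auto simp: abs_minus_commute)
qed

text \<open>Writes the difference as (\<phi> r / r) (x - z) + (\<phi> r / r - \<phi> s / s) z with r = |x| and s = |z|.\<close>

lemma radial_field_lipschitz_aux:
  fixes x z :: "'a::real_normed_vector"
  assumes \<phi>0: "\<phi> 0 = 0" and lip: "\<And>r s. r \<in> {0..R} \<Longrightarrow> s \<in> {0..R} \<Longrightarrow> \<bar>\<phi> r - \<phi> s\<bar> \<le> B * \<bar>r - s\<bar>"
    and x: "norm x \<le> R" and zx: "norm z \<le> norm x" and B: "B \<ge> 0"
  shows "norm (\<phi> (norm x) *\<^sub>R (x /\<^sub>R norm x) - \<phi> (norm z) *\<^sub>R (z /\<^sub>R norm z)) \<le> 3 * B * norm (x - z)"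
proof -
  define r where "r = norm x"
  define s where "s = norm z"
  have rs: "0 \<le> s" "s \<le> r" "r \<le> R" using x zx by (auto simp: r_def s_def)
  have rsd: "r - s \<le> norm (x - z)" unfolding r_def s_def by (rule norm_triangle_ineq2)
  show ?thesis
  proof (cases "x = 0")
    case True
    then show ?thesis using zx by simp
  next
    case False
    then have r0: "r > 0" by (simp add: r_def)
    have eq: "\<phi> r *\<^sub>R (x /\<^sub>R r) - \<phi> s *\<^sub>R (z /\<^sub>R s) = (\<phi> r / r) *\<^sub>R (x - z) + (\<phi> r / r - \<phi> s / s) *\<^sub>R z"
      by (simp add: algebra_simps divide_inverse)
    have a1: "\<bar>\<phi> r / r\<bar> \<le> B"
    proof -
      have "\<bar>\<phi> r\<bar> \<le> B * r" using lip[of r 0] rs \<phi>0 by simp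
      then show ?thesis using r0 by (simp add: abs_div divide_le_eq)
    qed
    have a2: "\<bar>\<phi> r / r - \<phi> s / s\<bar> * s \<le> 2 * B * (r - s)"
    proof (cases "s = 0")
      case True
      then show ?thesis using rs B by simp
    next
      case False
      then have s0: "s > 0" using rs by simp
      have "\<bar>\<phi> r / r - \<phi> s / s\<bar> * s = \<bar>s * (\<phi> r - \<phi> s) + (s - r) * \<phi> s\<bar> / r"
        using s0 r0 by (simp add: field_simps abs_div abs_mult)
      also have "\<dots> \<le> (s * (B * (r - s)) + (r - s) * (B * s)) / r"
      proof (rule divide_right_mono)
        have l1: "\<bar>\<phi> r - \<phi> s\<bar> \<le> B * (r - s)" using lip[of r s] rs by simp
        have l2: "\<bar>\<phi> s\<bar> \<le> B * s" using lip[of s 0] rs \<phi>0 by simp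
        have "\<bar>s * (\<phi> r - \<phi> s) + (s - r) * \<phi> s\<bar> \<le> \<bar>s * (\<phi> r - \<phi> s)\<bar> + \<bar>(s - r) * \<phi> s\<bar>"
          by (rule abs_triangle_ineq)
        also have "\<dots> = s * \<bar>\<phi> r - \<phi> s\<bar> + (r - s) * \<bar>\<phi> s\<bar>" using rs by (simp add: abs_mult)
        also have "\<dots> \<le> s * (B * (r - s)) + (r - s) * (B * s)"
          using l1 l2 rs by (intro add_mono mult_left_mono) auto
        finally show "\<bar>s * (\<phi> r - \<phi> s) + (s - r) * \<phi> s\<bar> \<le> s * (B * (r - s)) + (r - s) * (B * s)" .
      qed (use r0 in simp)
      also have "\<dots> = 2 * B * (r - s) * (s / r)" by (simp add: field_simps)
      also have "\<dots> \<le> 2 * B * (r - s) * 1"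
        using rs r0 B by (intro mult_left_mono) (auto simp: divide_le_eq)
      finally show ?thesis by simp
    qed
    have "norm (\<phi> r *\<^sub>R (x /\<^sub>R r) - \<phi> s *\<^sub>R (z /\<^sub>R s))
        \<le> \<bar>\<phi> r / r\<bar> * norm (x - z) + \<bar>\<phi> r / r - \<phi> s / s\<bar> * s"
    proof -
      have "norm ((\<phi> r / r) *\<^sub>R (x - z) + (\<phi> r / r - \<phi> s / s) *\<^sub>R z)
          \<le> norm ((\<phi> r / r) *\<^sub>R (x - z)) + norm ((\<phi> r / r - \<phi> s / s) *\<^sub>R z)"
        by (rule norm_triangle_ineq)
      then show ?thesis unfolding eq by (simp add: s_def)
    qed
    also have "\<dots> \<le> B * norm (x - z) + 2 * B * norm (x - z)"
    proof -
      have t1: "\<bar>\<phi> r / r\<bar> * norm (x - z) \<le> B * norm (x - z)" by (rule mult_right_mono[OF a1]) simp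
      have "2 * B * (r - s) \<le> 2 * B * norm (x - z)" using rsd B by (intro mult_left_mono) auto
      then show ?thesis using t1 a2 by linarith
    qed
    finally show ?thesis unfolding r_def s_def by linarith
  qed
qed

lemma radial_field_lipschitz:
  fixes x z :: "'a::real_normed_vector"
  assumes \<phi>0: "\<phi> 0 = 0" and lip: "\<And>r s. r \<in> {0..R} \<Longrightarrow> s \<in> {0..R} \<Longrightarrow> \<bar>\<phi> r - \<phi> s\<bar> \<le> B * \<bar>r - s\<bar>"
    and x: "norm x \<le> R" and z: "norm z \<le> R" and B: "B \<ge> 0"
  shows "norm (\<phi> (norm x) *\<^sub>R (x /\<^sub>R norm x) - \<phi> (norm z) *\<^sub>R (z /\<^sub>R norm z)) \<le> 3 * B * norm (x - z)"
proof (cases "norm z \<le> norm x")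
  case True
  then show ?thesis using radial_field_lipschitz_aux[OF \<phi>0 lip x True B] by blast
next
  case False
  then show ?thesis using radial_field_lipschitz_aux[OF \<phi>0 lip z _ B, of x] by (simp add: norm_minus_commute)
qed

lemma floor_multiple_div_tendsto:
  fixes x :: real
  shows "(\<lambda>m. real_of_int \<lfloor>real (Suc m) * x\<rfloor> / real (Suc m)) \<longlonglongrightarrow> x"
proof (rule tendsto_sandwich[of "\<lambda>m. x - 1 / real (Suc m)" _ _ "\<lambda>m. x"])
  show "\<forall>\<^sub>F m in sequentially. x - 1 / real (Suc m) \<le> real_of_int \<lfloor>real (Suc m) * x\<rfloor> / real (Suc m)"
  proof (intro always_eventually allI)
    fix m
    have "real (Suc m) * x - 1 \<le> real_of_int \<lfloor>real (Suc m) * x\<rfloor>" by linarith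
    then have "(real (Suc m) * x - 1) / real (Suc m) \<le> real_of_int \<lfloor>real (Suc m) * x\<rfloor> / real (Suc m)"
      by (rule divide_right_mono) simp
    moreover have "x - 1 / real (Suc m) = (real (Suc m) * x - 1) / real (Suc m)"
      by (simp add: field_simps del: of_nat_Suc)
    ultimately show "x - 1 / real (Suc m) \<le> real_of_int \<lfloor>real (Suc m) * x\<rfloor> / real (Suc m)" by simp
  qed
  show "\<forall>\<^sub>F m in sequentially. real_of_int \<lfloor>real (Suc m) * x\<rfloor> / real (Suc m) \<le> x"
  proof (intro always_eventually allI)
    fix m
    have "real_of_int \<lfloor>real (Suc m) * x\<rfloor> \<le> real (Suc m) * x" by linarith
    then show "real_of_int \<lfloor>real (Suc m) * x\<rfloor> / real (Suc m) \<le> x"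
      by (simp add: field_simps del: of_nat_Suc)
  qed
  have "(\<lambda>m. 1 / real (Suc m)) \<longlonglongrightarrow> 0" by (rule LIMSEQ_Suc[OF lim_const_over_n]) 
  then show "(\<lambda>m. x - 1 / real (Suc m)) \<longlonglongrightarrow> x" using tendsto_diff[OF tendsto_const, of _ 0 _ x] by simp
qed simp

text \<open>The composition with a Caratheodory function is measurable: approximate \<rho> by the
  countably-valued functions \<lfloor>m \<rho>\<rfloor> / m.\<close>

lemma borel_measurable_caratheodory_compose:
  fixes G :: "real \<Rightarrow> real \<Rightarrow> real"
  assumes Gm: "\<And>r. r \<ge> 0 \<Longrightarrow> (\<lambda>t. G t r) \<in> borel_measurable (lebesgue_on S)"
    and Gc: "\<And>t. t \<in> S \<Longrightarrow> continuous_on {0..} (G t)"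
    and \<rho>m: "\<rho> \<in> borel_measurable (lebesgue_on S)" and \<rho>0: "\<And>t. \<rho> t \<ge> 0"
  shows "(\<lambda>t. G t (\<rho> t)) \<in> borel_measurable (lebesgue_on S)"
proof (rule borel_measurable_LIMSEQ_metric)
  define q where "q m t = real_of_int \<lfloor>real (Suc m) * \<rho> t\<rfloor> / real (Suc m)" for m t
  show "(\<lambda>t. G t (max 0 (q m t))) \<in> borel_measurable (lebesgue_on S)" for m
  proof (rule measurable_compose_countable'[where I = "range (\<lambda>i::int. real_of_int i / real (Suc m))"
      and f = "\<lambda>c t. G t (max 0 c)" and g = "q m"])
    show "(\<lambda>t. G t (max 0 c)) \<in> borel_measurable (lebesgue_on S)" if "c \<in> range (\<lambda>i::int. real_of_int i / real (Suc m))" for c using Gm by simp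
    have qm: "q m \<in> borel_measurable (lebesgue_on S)"
      unfolding q_def
      by (intro borel_measurable_divide measurable_compose[OF _ borel_measurable_real_floor]
            borel_measurable_times borel_measurable_const \<rho>m)
    show "q m \<in> lebesgue_on S \<rightarrow>\<^sub>M count_space (range (\<lambda>i::int. real_of_int i / real (Suc m)))"
    proof (subst measurable_count_space_eq_countable, simp, intro conjI ballI)
      show "q m \<in> space (lebesgue_on S) \<rightarrow> range (\<lambda>i::int. real_of_int i / real (Suc m))"
        by (auto simp: q_def)
      fix a show "q m -` {a} \<inter> space (lebesgue_on S) \<in> sets (lebesgue_on S)"
        by (rule measurable_sets[OF qm]) (rule borel_closed, simp)
    qed
  qed simp
  fix t assume t: "t \<in> space (lebesgue_on S)"
  have "(\<lambda>m. max 0 (q m t)) \<longlonglongrightarrow> max 0 (\<rho> t)"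
    unfolding q_def by (intro tendsto_max tendsto_const floor_multiple_div_tendsto)
  then have lim: "(\<lambda>m. max 0 (q m t)) \<longlonglongrightarrow> \<rho> t" using \<rho>0[of t] by simp
  have tS: "t \<in> S" using t by simp
  show "(\<lambda>m. G t (max 0 (q m t))) \<longlonglongrightarrow> G t (\<rho> t)"
    using continuous_on_tendsto_compose[OF Gc[OF tS] lim] \<rho>0[of t] by simp
qed

definition drift :: "(real \<Rightarrow> real \<Rightarrow> real) \<Rightarrow> (real \<Rightarrow> real^'n^'n) \<Rightarrow> real \<Rightarrow> real^'n \<Rightarrow> real^'n" where
  "drift G A s x = G s (norm x) *\<^sub>R (x /\<^sub>R norm x) + A s *v x"

lemma continuous_on_matrix_vector_mult: "continuous_on UNIV (\<lambda>p::(real^'n^'m) \<times> (real^'n). fst p *v snd p)"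
  unfolding matrix_vector_mult_def
  by (auto intro!: continuous_on_vec_lambda continuous_intros)

lemma drift_measurable:
  fixes G :: "real \<Rightarrow> real \<Rightarrow> real" and A :: "real \<Rightarrow> real^'n^'n"
  assumes Gm: "\<And>r. r \<ge> 0 \<Longrightarrow> (\<lambda>t. G t r) \<in> borel_measurable (lebesgue_on {0..})"
    and Gc: "\<And>t. t \<ge> 0 \<Longrightarrow> continuous_on {0..} (G t)"
    and Am: "A \<in> borel_measurable (lebesgue_on {0..})"
    and S: "S \<subseteq> {0..}"
    and wm: "w \<in> borel_measurable (lebesgue_on S)"
  shows "(\<lambda>s. drift G A s (w s)) \<in> borel_measurable (lebesgue_on S)"
proof -
  have g: "(\<lambda>s. G s (norm (w s))) \<in> borel_measurable (lebesgue_on S)"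
  proof (rule borel_measurable_caratheodory_compose[where G = G and \<rho> = "\<lambda>s. norm (w s)"])
    show "(\<lambda>t. G t r) \<in> borel_measurable (lebesgue_on S)" if "r \<ge> 0" for r
      by (rule measurable_restrict_mono[OF Gm[OF that] S])
    show "continuous_on {0..} (G t)" if "t \<in> S" for t using Gc that S by auto
  qed (use measurable_compose[OF wm borel_measurable_norm] in auto)
  have a: "(\<lambda>s. A s *v w s) \<in> borel_measurable (lebesgue_on S)"
    by (rule borel_measurable_continuous_Pair[OF measurable_restrict_mono[OF Am S] wm continuous_on_matrix_vector_mult])
  show ?thesis unfolding drift_def
    by (intro borel_measurable_add borel_measurable_scaleR g borel_measurable_inverse
        measurable_compose[OF wm borel_measurable_norm] wm a)
qed

lemma drift_lipschitz_on_ball: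
  fixes G G' :: "real \<Rightarrow> real \<Rightarrow> real" and A :: "real \<Rightarrow> real^'n^'n"
  assumes der: "\<And>r. r \<ge> 0 \<Longrightarrow> (G s has_real_derivative G' s r) (at r within {0..})"
    and G0: "G s 0 = 0"
    and bd: "\<And>r. r \<in> {0..M} \<Longrightarrow> \<bar>G' s r\<bar> \<le> LG" and LG: "LG \<ge> 0"
    and LA: "onorm (\<lambda>x. A s *v x) \<le> LA"
    and x: "norm x \<le> M" and z: "norm z \<le> M"
  shows "norm (drift G A s x - drift G A s z) \<le> (3 * LG + LA) * norm (x - z)"
proof -
  have r: "norm (G s (norm x) *\<^sub>R (x /\<^sub>R norm x) - G s (norm z) *\<^sub>R (z /\<^sub>R norm z)) \<le> 3 * LG * norm (x - z)"
    by (rule radial_field_lipschitz[where \<phi> = "G s", OF G0 _ x z LG]) (rule lipschitz_of_derivative_bound[OF der bd])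
  have "norm (A s *v x - A s *v z) = norm (A s *v (x - z))" by (simp add: matrix_vector_mult_diff_distrib)
  also have "\<dots> \<le> onorm (\<lambda>x. A s *v x) * norm (x - z)" by (rule onorm[OF matrix_vector_mul_bounded_linear])
  also have "\<dots> \<le> LA * norm (x - z)" by (rule mult_right_mono[OF LA]) simp
  finally have a: "norm (A s *v x - A s *v z) \<le> LA * norm (x - z)" .
  have "norm (drift G A s x - drift G A s z) \<le> norm (G s (norm x) *\<^sub>R (x /\<^sub>R norm x) - G s (norm z) *\<^sub>R (z /\<^sub>R norm z))
      + norm (A s *v x - A s *v z)"
    unfolding drift_def by (rule order_trans[OF _ norm_triangle_ineq]) (simp add: algebra_simps)
  also have "\<dots> \<le> (3 * LG + LA) * norm (x - z)" using r a by (simp add: algebra_simps)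
  finally show ?thesis .
qed

lemma rhs_eq_drift: "rhs G A b s x v = drift G A s x + b s v"
  by (simp add: rhs_def drift_def)

lemma sol_closed_rhs_iff:
  "sol_closed (rhs G A b) y0 T z v \<longleftrightarrow> solves_on (\<lambda>s x. drift G A s x + b s (v s)) y0 T z"
  by (simp add: sol_closed_def solves_on_def rhs_eq_drift)

lemma sol_open_rhs_imp_solves_on:
  assumes "sol_open (rhs G A b) y0 T z v" "\<tau> < T"
  shows "solves_on (\<lambda>s x. drift G A s x + b s (v s)) y0 \<tau> z"
  using assms unfolding sol_open_def solves_on_def rhs_eq_drift by (auto intro: continuous_on_subset)

section \<open>The truncated equation\<close>

text \<open>F is the state-dependent part of the right-hand side; the control enters only through an
  additive integrable term g. Composing F with the projection clamp onto the ball of radius R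
  makes it globally Lipschitz without changing it inside the ball.\<close>

locale truncated_ode =
  fixes F :: "real \<Rightarrow> 'a::euclidean_space \<Rightarrow> 'a" and y0 :: 'a and R L T1 :: real
  assumes R_nonneg: "0 \<le> R" and L_nonneg: "0 \<le> L" and T1_pos: "0 < T1"
    and lipschitz_on_ball: "\<And>s x z. s \<in> {0..T1} \<Longrightarrow> norm x \<le> R \<Longrightarrow> norm z \<le> R \<Longrightarrow>
      norm (F s x - F s z) \<le> L * norm (x - z)"
    and F_zero: "\<And>s. s \<in> {0..T1} \<Longrightarrow> F s 0 = 0"
    and F_measurable: "\<And>w. w \<in> borel_measurable (lebesgue_on {0..T1}) \<Longrightarrow>
      (\<lambda>s. F s (w s)) \<in> borel_measurable (lebesgue_on {0..T1})"

begin

definition clamp :: "'a \<Rightarrow> 'a" where "clamp = closest_point (cball 0 R)"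

lemma clamp_lipschitz: "norm (clamp x - clamp z) \<le> norm (x - z)"
  using closest_point_lipschitz[OF convex_cball closed_cball, of 0 R x z] R_nonneg
  by (simp add: clamp_def dist_norm)

lemma norm_clamp_le: "norm (clamp x) \<le> R"
  using closest_point_in_set[OF closed_cball, of 0 R x] R_nonneg by (simp add: clamp_def)

lemma clamp_id: "norm x \<le> R \<Longrightarrow> clamp x = x"
  by (simp add: clamp_def closest_point_self)

lemma continuous_on_clamp: "continuous_on UNIV clamp"
  by (rule lipschitz_on_continuous_on[of 1]) (auto intro!: lipschitz_onI simp: dist_norm clamp_lipschitz)

lemma truncated_lipschitz:
  assumes "s \<in> {0..T1}"
  shows "norm (F s (clamp x) - F s (clamp z)) \<le> L * norm (x - z)"
proof -
  have "norm (F s (clamp x) - F s (clamp z)) \<le> L * norm (clamp x - clamp z)"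
    by (rule lipschitz_on_ball[OF assms norm_clamp_le norm_clamp_le])
  also have "\<dots> \<le> L * norm (x - z)" by (rule mult_left_mono[OF clamp_lipschitz L_nonneg])
  finally show ?thesis .
qed

lemma norm_truncated_le:
  assumes "s \<in> {0..T1}"
  shows "norm (F s (clamp x)) \<le> L * R"
proof -
  have "norm (F s (clamp x) - F s 0) \<le> L * norm (clamp x - 0)"
    by (rule lipschitz_on_ball[OF assms norm_clamp_le]) (simp add: R_nonneg)
  also have "\<dots> \<le> L * R" using norm_clamp_le L_nonneg by (simp add: mult_left_mono)
  finally show ?thesis using F_zero[OF assms] by simp
qed

lemma truncated_absolutely_integrable:
  assumes z: "continuous_on {0..T1} z" and g: "g absolutely_integrable_on {0..T1}"
  shows "(\<lambda>s. F s (clamp (z s)) + g s) absolutely_integrable_on {0..T1}"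
proof -
  have "(\<lambda>s. clamp (z s)) \<in> borel_measurable (lebesgue_on {0..T1})"
    by (rule continuous_imp_measurable_on_sets_lebesgue)
      (auto intro: continuous_on_compose2[OF continuous_on_clamp z])
  then have "(\<lambda>s. F s (clamp (z s))) absolutely_integrable_on {0..T1}"
    by (intro measurable_bounded_by_integrable_imp_absolutely_integrable[where g = "\<lambda>_. L * R"]
        F_measurable integrable_const_ivl norm_truncated_le) auto
  then show ?thesis using g by (rule set_integral_add(1))
qed

definition trunc_solution :: "(real \<Rightarrow> 'a) \<Rightarrow> (real \<Rightarrow> 'a) \<Rightarrow> bool" where
  "trunc_solution g w \<longleftrightarrow> continuous_on {0..T1} w \<and>
     (\<forall>t\<in>{0..T1}. w t = y0 + integral {0..t} (\<lambda>s. F s (clamp (w s)) + g s))"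

lemma trunc_solution_exists:
  assumes "g absolutely_integrable_on {0..T1}"
  shows "\<exists>w. trunc_solution g w"
  unfolding trunc_solution_def
  by (rule lipschitz_integral_equation_exists[where P = "\<lambda>s x. F s (clamp x) + g s" and L = L])
    (use T1_pos L_nonneg truncated_lipschitz truncated_absolutely_integrable[OF _ assms] in auto)

lemma trunc_solution_absolutely_integrable:
  assumes "trunc_solution g w" "g absolutely_integrable_on {0..T1}" "t \<le> T1"
  shows "(\<lambda>s. F s (clamp (w s)) + g s) absolutely_integrable_on {0..t}"
proof (rule absolutely_integrable_on_subinterval)
  show "(\<lambda>s. F s (clamp (w s)) + g s) absolutely_integrable_on {0..T1}"
    using assms(1) by (intro truncated_absolutely_integrable[OF _ assms(2)]) (simp add: trunc_solution_def)
qed (use assms(3) in auto)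

lemma trunc_solution_integrable:
  "trunc_solution g w \<Longrightarrow> g absolutely_integrable_on {0..T1} \<Longrightarrow> t \<le> T1 \<Longrightarrow>
    (\<lambda>s. F s (clamp (w s)) + g s) integrable_on {0..t}"
  using trunc_solution_absolutely_integrable by (simp add: absolutely_integrable_on_def)

lemma trunc_solution_dist_le:
  assumes w: "trunc_solution g w" and w': "trunc_solution g' w'"
    and g: "g absolutely_integrable_on {0..T1}" and g': "g' absolutely_integrable_on {0..T1}"
    and small: "\<And>t. t \<in> {0..T1} \<Longrightarrow> norm (integral {0..t} (\<lambda>s. g s - g' s)) \<le> \<epsilon>"
    and t: "t \<in> {0..T1}"
  shows "norm (w t - w' t) \<le> \<epsilon> * exp (L * t)"
proof (rule lipschitz_integral_equation_dist_le
    [where P = "\<lambda>s x. F s (clamp x) + g s" and Q = "\<lambda>s x. F s (clamp x) + g' s" and t = T1])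
  show "(\<lambda>s. F s (clamp (w' s)) + g s) integrable_on {0..T1}"
    using truncated_absolutely_integrable[OF _ g, of w'] w' by (simp add: trunc_solution_def absolutely_integrable_on_def)
  show "norm (integral {0..\<tau>} (\<lambda>s. F s (clamp (w' s)) + g s - (F s (clamp (w' s)) + g' s))) \<le> \<epsilon>"
    if "\<tau> \<in> {0..T1}" for \<tau>
    using small[OF that] by simp
qed (use w w' g g' t L_nonneg truncated_lipschitz trunc_solution_integrable in \<open>auto simp: trunc_solution_def\<close>)

lemma solution_in_ball_eq_trunc_solution:
  assumes t: "0 < t" "t \<le> T1" and z: "solves_on (\<lambda>s x. F s x + g s) y0 t z"
    and zR: "\<And>\<sigma>. \<sigma> \<in> {0..t} \<Longrightarrow> norm (z \<sigma>) \<le> R"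
    and w: "trunc_solution g w" and g: "g absolutely_integrable_on {0..T1}"
    and \<tau>: "\<tau> \<in> {0..t}"
  shows "z \<tau> = w \<tau>"
proof -
  have cz: "continuous_on {0..t} z" using z by (simp add: solves_on_def)
  have Fz: "F s (clamp (z s)) + g s = F s (z s) + g s" if "s \<in> {0..t}" for s
    using clamp_id[OF zR[OF that]] by simp
  have iz: "(\<lambda>s. F s (clamp (z s)) + g s) integrable_on {0..t}"
    using z t Fz integrable_cong[of "{0..t}" "\<lambda>s. F s (clamp (z s)) + g s"]
    by (auto simp: solves_on_def absolutely_integrable_on_def)
  have ez: "z r = y0 + integral {0..r} (\<lambda>s. F s (clamp (z s)) + g s)" if r: "r \<in> {0..t}" for r
  proof (cases "r = 0")
    case True then show ?thesis using solves_on_initial_value[OF z t(1)] by simp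
  next
    case False
    then have "z r = y0 + integral {0..r} (\<lambda>s. F s (z s) + g s)" using z r by (auto simp: solves_on_def)
    also have "integral {0..r} (\<lambda>s. F s (z s) + g s) = integral {0..r} (\<lambda>s. F s (clamp (z s)) + g s)"
      by (rule integral_cong) (use Fz r in auto)
    finally show ?thesis .
  qed
  have "norm (z \<tau> - w \<tau>) \<le> 0 * exp (L * \<tau>)"
  proof (rule lipschitz_integral_equation_dist_le
      [where P = "\<lambda>s x. F s (clamp x) + g s" and Q = "\<lambda>s x. F s (clamp x) + g s"])
    show "continuous_on {0..t} w"
      using w t by (auto simp: trunc_solution_def intro: continuous_on_subset)
  qed (use t iz ez cz w g \<tau> L_nonneg truncated_lipschitz trunc_solution_integrable
      in \<open>auto simp: trunc_solution_def\<close>)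
  then show ?thesis by simp
qed

text \<open>A solution that could leave the ball of radius R would have to coincide with w up to the first
  exit time, where however w is still strictly inside.\<close>

lemma solution_eq_trunc_solution:
  assumes t: "0 < t" "t \<le> T1" and z: "solves_on (\<lambda>s x. F s x + g s) y0 t z"
    and w: "trunc_solution g w" and g: "g absolutely_integrable_on {0..T1}"
    and wR: "\<And>\<tau>. \<tau> \<in> {0..t} \<Longrightarrow> norm (w \<tau>) < R"
    and \<tau>: "\<tau> \<in> {0..t}"
  shows "z \<tau> = w \<tau>"
proof -
  have cz: "continuous_on {0..t} z" using z by (simp add: solves_on_def)
  define S where "S = {\<sigma> \<in> {0..t}. R \<le> norm (z \<sigma>)}"
  show ?thesis
  proof (cases "S = {}")
    case True
    then show ?thesis
      by (intro solution_in_ball_eq_trunc_solution[OF t z _ w g \<tau>]) (force simp: S_def)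
  next
    case False
    define \<tau>0 where "\<tau>0 = Inf S"
    have "closed S" unfolding S_def
      by (intro continuous_on_closed_Collect_le continuous_intros cz)
    then have \<tau>0S: "\<tau>0 \<in> S" unfolding \<tau>0_def
      by (rule closed_contains_Inf[OF False, rotated]) (auto simp: S_def bdd_below_def)
    have below: "norm (z \<sigma>) \<le> R" if "\<sigma> \<in> {0..<\<tau>0}" for \<sigma>
    proof (rule ccontr)
      assume "\<not> norm (z \<sigma>) \<le> R"
      then have "\<sigma> \<in> S" using that \<tau>0S by (auto simp: S_def)
      then have "\<tau>0 \<le> \<sigma>" unfolding \<tau>0_def by (rule cInf_lower) (auto simp: S_def bdd_below_def)
      then show False using that by simp
    qed
    have z0: "z 0 = w 0" using solves_on_initial_value[OF z t(1)] w t by (simp add: trunc_solution_def)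
    have \<tau>0_pos: "0 < \<tau>0"
      using \<tau>0S wR[of 0] t z0 by (cases "\<tau>0 = 0") (auto simp: S_def)
    have \<tau>0t: "\<tau>0 \<le> t" using \<tau>0S by (simp add: S_def)
    have zR: "norm (z \<sigma>) \<le> R" if "\<sigma> \<in> {0..\<tau>0}" for \<sigma>
    proof -
      have "closed {\<sigma> \<in> {0..\<tau>0}. norm (z \<sigma>) \<le> R}"
        by (intro continuous_on_closed_Collect_le continuous_intros continuous_on_subset[OF cz])
          (use \<tau>0t in auto)
      moreover have "{0..<\<tau>0} \<subseteq> {\<sigma> \<in> {0..\<tau>0}. norm (z \<sigma>) \<le> R}" using below by auto
      ultimately have "closure {0..<\<tau>0} \<subseteq> {\<sigma> \<in> {0..\<tau>0}. norm (z \<sigma>) \<le> R}"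
        by (rule closure_minimal[rotated])
      then show ?thesis using that \<tau>0_pos by auto
    qed
    have "z \<tau>0 = w \<tau>0"
      by (rule solution_in_ball_eq_trunc_solution[OF \<tau>0_pos order_trans[OF \<tau>0t t(2)]
            solves_on_subinterval[OF z \<tau>0t] zR w g]) (use \<tau>0_pos in auto)
    moreover have "R \<le> norm (z \<tau>0)" using \<tau>0S by (simp add: S_def)
    moreover have "norm (w \<tau>0) < R" using wR \<tau>0_pos \<tau>0t by simp
    ultimately show ?thesis by simp
  qed
qed

lemma trunc_solution_solves_on:
  assumes w: "trunc_solution g w" and g: "g absolutely_integrable_on {0..T1}"
    and t: "t \<le> T1" and wR: "\<And>\<tau>. \<tau> \<in> {0..t} \<Longrightarrow> norm (w \<tau>) \<le> R"
  shows "solves_on (\<lambda>s x. F s x + g s) y0 t w"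
proof -
  have eq: "F s (clamp (w s)) + g s = F s (w s) + g s" if "s \<in> {0..t}" for s
    using clamp_id[OF wR[OF that]] by simp
  have wi: "(\<lambda>s. F s (clamp (w s)) + g s) absolutely_integrable_on {0..t}"
    by (rule trunc_solution_absolutely_integrable[OF w g t])
  show ?thesis unfolding solves_on_def
  proof (intro conjI ballI)
    show "continuous_on {0..t} w" using w t by (auto simp: trunc_solution_def intro: continuous_on_subset)
    fix \<tau> assume \<tau>: "\<tau> \<in> {0<..t}"
    show "(\<lambda>s. F s (w s) + g s) absolutely_integrable_on {0..\<tau>}"
      by (rule absolutely_integrable_on_cong[OF _ absolutely_integrable_on_subinterval[OF wi]])
        (use eq \<tau> in auto)
    have "integral {0..\<tau>} (\<lambda>s. F s (clamp (w s)) + g s) = integral {0..\<tau>} (\<lambda>s. F s (w s) + g s)"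
      by (rule integral_cong) (use eq \<tau> in auto)
    then show "w \<tau> = y0 + integral {0..\<tau>} (\<lambda>s. F s (w s) + g s)"
      using w \<tau> t by (auto simp: trunc_solution_def)
  qed
qed

lemma trunc_solution_bounded_past:
  assumes T: "0 < T" "T < T1"
    and y: "\<And>\<tau>. \<tau> \<in> {0<..<T} \<Longrightarrow> solves_on (\<lambda>s x. F s x + g s) y0 \<tau> y"
    and yR: "\<And>t. t \<in> {0..<T} \<Longrightarrow> norm (y t) \<le> R0" and R0: "R0 \<le> R"
    and w: "trunc_solution g w" and g: "g absolutely_integrable_on {0..T1}"
    and e: "0 < e"
  shows "\<exists>\<delta>>0. T + \<delta> \<le> T1 \<and> (\<forall>t\<in>{0..T + \<delta>}. norm (w t) \<le> R0 + e)"
proof -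
  have cw: "continuous_on {0..T1} w" using w by (simp add: trunc_solution_def)
  have yw: "y t = w t" if t: "t \<in> {0..<T}" for t
  proof -
    define \<tau> where "\<tau> = (t + T) / 2"
    have \<tau>: "0 < \<tau>" "\<tau> < T" "t \<le> \<tau>" using t by (auto simp: \<tau>_def)
    have y\<tau>: "solves_on (\<lambda>s x. F s x + g s) y0 \<tau> y" using y \<tau> by simp
    show ?thesis
      by (rule solution_in_ball_eq_trunc_solution[OF \<tau>(1) _ y\<tau> _ w g]) (use \<tau> t T yR R0 in force)+
  qed
  have wT: "norm (w t) \<le> R0" if "t \<in> {0..T}" for t
  proof -
    have "closed {\<sigma> \<in> {0..T}. norm (w \<sigma>) \<le> R0}"
      by (intro continuous_on_closed_Collect_le continuous_intros continuous_on_subset[OF cw])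
        (use T in auto)
    moreover have "{0..<T} \<subseteq> {\<sigma> \<in> {0..T}. norm (w \<sigma>) \<le> R0}" using yw yR by force
    ultimately have "closure {0..<T} \<subseteq> {\<sigma> \<in> {0..T}. norm (w \<sigma>) \<le> R0}"
      by (rule closure_minimal[rotated])
    then show ?thesis using that T by auto
  qed
  obtain \<delta>1 where \<delta>1: "\<delta>1 > 0" and near: "\<And>t. t \<in> {0..T1} \<Longrightarrow> dist t T < \<delta>1 \<Longrightarrow> dist (w t) (w T) < e"
    using cw[unfolded continuous_on_iff] T e by (metis atLeastAtMost_iff less_imp_le)
  define \<delta> where "\<delta> = min (T1 - T) (\<delta>1 / 2)"
  have \<delta>: "\<delta> > 0" "T + \<delta> \<le> T1" "\<delta> < \<delta>1" using \<delta>1 T by (auto simp: \<delta>_def)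
  have "norm (w t) \<le> R0 + e" if t: "t \<in> {0..T + \<delta>}" for t
  proof (cases "t \<le> T")
    case True then show ?thesis using wT[of t] t e by auto
  next
    case False
    then have "dist (w t) (w T) < e" using t \<delta> by (intro near) (auto simp: dist_real_def)
    moreover have "norm (w T) \<le> R0" using wT T by auto
    ultimately show ?thesis by (smt (verit) dist_norm norm_triangle_ineq3)
  qed
  then show ?thesis using \<delta> by blast
qed

lemma trunc_solutions_uniformly_close:
  assumes g: "g absolutely_integrable_on {0..T1}" and gk: "\<And>k. gk k absolutely_integrable_on {0..T1}"
    and weak: "weakly_null_on T1 (\<lambda>k s. gk k s - g s)"
    and w: "trunc_solution g w" and e: "0 < e"
  shows "\<exists>K. \<forall>k\<ge>K. \<forall>wk. trunc_solution (gk k) wk \<longrightarrow> (\<forall>t\<in>{0..T1}. norm (wk t - w t) \<le> e)"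
proof -
  define \<epsilon> where "\<epsilon> = e * exp (- (L * T1))"
  have \<epsilon>: "0 < \<epsilon>" using e by (simp add: \<epsilon>_def)
  obtain K where K: "\<And>k t. k \<ge> K \<Longrightarrow> t \<in> {0..T1} \<Longrightarrow> norm (integral {0..t} (\<lambda>s. gk k s - g s)) \<le> \<epsilon>"
    using weakly_null_primitives_uniformly_small[OF weak \<epsilon> T1_pos] by blast
  have "norm (wk t - w t) \<le> e" if k: "k \<ge> K" and wk: "trunc_solution (gk k) wk" and t: "t \<in> {0..T1}"
    for k wk t
  proof -
    have "norm (wk t - w t) \<le> \<epsilon> * exp (L * t)"
      by (rule trunc_solution_dist_le[OF wk w gk g K[OF k] t])
    also have "\<dots> \<le> \<epsilon> * exp (L * T1)"
      using t L_nonneg \<epsilon> by (auto intro!: mult_left_mono)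
    also have "\<dots> = e" by (simp add: \<epsilon>_def exp_minus)
    finally show ?thesis .
  qed
  then show ?thesis by blast
qed

lemma perturbed_solutions_close:
  assumes T: "0 < T" "T < T1"
    and y: "\<And>\<tau>. \<tau> \<in> {0<..<T} \<Longrightarrow> solves_on (\<lambda>s x. F s x + g s) y0 \<tau> y"
    and yR: "\<And>t. t \<in> {0..<T} \<Longrightarrow> norm (y t) \<le> R0" and R0: "R0 + 1 < R"
    and g: "g absolutely_integrable_on {0..T1}" and gk: "\<And>k. gk k absolutely_integrable_on {0..T1}"
    and weak: "weakly_null_on T1 (\<lambda>k s. gk k s - g s)"
  shows "\<exists>\<delta>>0. \<exists>K. T + \<delta> \<le> T1 \<and>
    (\<exists>z. solves_on (\<lambda>s x. F s x + g s) y0 (T + \<delta>) z) \<and>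
    (\<forall>k\<ge>K. \<exists>zk. solves_on (\<lambda>s x. F s x + gk k s) y0 (T + \<delta>) zk) \<and>
    (\<forall>k\<ge>K. \<forall>zk z. solves_on (\<lambda>s x. F s x + gk k s) y0 (T + \<delta>) zk \<longrightarrow>
       solves_on (\<lambda>s x. F s x + g s) y0 (T + \<delta>) z \<longrightarrow> (\<forall>t\<in>{0..T + \<delta>}. norm (zk t - z t) \<le> 1))"
proof -
  obtain w where w: "trunc_solution g w" using trunc_solution_exists[OF g] by blast
  have half: "(0::real) < 1/2" and R0_le: "R0 \<le> R" using R0 by simp_all
  obtain \<delta> where \<delta>: "\<delta> > 0" "T + \<delta> \<le> T1" and wb': "\<forall>t\<in>{0..T + \<delta>}. norm (w t) \<le> R0 + 1/2"
    using trunc_solution_bounded_past[OF T y yR R0_le w g half] by blast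
  note wb = wb'[rule_format]
  obtain K where K': "\<forall>k\<ge>K. \<forall>wk. trunc_solution (gk k) wk \<longrightarrow> (\<forall>t\<in>{0..T1}. norm (wk t - w t) \<le> 1/2)"
    using trunc_solutions_uniformly_close[OF g gk weak w half] by blast
  note K = K'[rule_format]
  have Td: "0 < T + \<delta>" "T + \<delta> \<le> T1" using T \<delta> by auto
  have w_in_ball: "norm (w t) < R" if "t \<in> {0..T + \<delta>}" for t using wb[OF that] R0 by simp
  have w_sol: "solves_on (\<lambda>s x. F s x + g s) y0 (T + \<delta>) w"
    by (rule trunc_solution_solves_on[OF w g Td(2) less_imp_le[OF w_in_ball]])
  have w_unique: "z t = w t" if "solves_on (\<lambda>s x. F s x + g s) y0 (T + \<delta>) z" "t \<in> {0..T + \<delta>}" for z t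
    by (rule solution_eq_trunc_solution[OF Td that(1) w g w_in_ball that(2)])
  have wk_in_ball: "norm (wk t) < R"
    if k: "k \<ge> K" and wk: "trunc_solution (gk k) wk" and t: "t \<in> {0..T + \<delta>}" for k wk t
  proof -
    have "norm (wk t) \<le> norm (w t) + norm (wk t - w t)" by (rule norm_triangle_sub)
    also have "\<dots> \<le> R0 + 1/2 + 1/2" using wb[OF t] K[OF k wk, of t] t Td by (intro add_mono) auto
    finally show ?thesis using R0 by simp
  qed
  have wk_sol: "solves_on (\<lambda>s x. F s x + gk k s) y0 (T + \<delta>) wk"
    if "k \<ge> K" "trunc_solution (gk k) wk" for k wk
    by (rule trunc_solution_solves_on[OF that(2) gk Td(2) less_imp_le[OF wk_in_ball[OF that]]])
  have wk_unique: "z t = wk t"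
    if "k \<ge> K" "trunc_solution (gk k) wk" "solves_on (\<lambda>s x. F s x + gk k s) y0 (T + \<delta>) z"
      "t \<in> {0..T + \<delta>}" for k wk z t
    by (rule solution_eq_trunc_solution[OF Td that(3) that(2) gk wk_in_ball[OF that(1,2)] that(4)])
  have wk_exists: "\<exists>zk. solves_on (\<lambda>s x. F s x + gk k s) y0 (T + \<delta>) zk" if k: "k \<ge> K" for k
  proof -
    obtain wk where wk: "trunc_solution (gk k) wk" using trunc_solution_exists[OF gk] by blast
    show ?thesis using wk_sol[OF k wk] by blast
  qed
  have close: "norm (zk t - z t) \<le> 1"
    if k: "k \<ge> K" and zk: "solves_on (\<lambda>s x. F s x + gk k s) y0 (T + \<delta>) zk"
      and z: "solves_on (\<lambda>s x. F s x + g s) y0 (T + \<delta>) z" and t: "t \<in> {0..T + \<delta>}" for k zk z t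
  proof -
    obtain wk where wk: "trunc_solution (gk k) wk" using trunc_solution_exists[OF gk] by blast
    have "t \<in> {0..T1}" using t Td(2) by simp
    then have "norm (wk t - w t) \<le> 1/2" by (rule K[OF k wk])
    then show ?thesis using wk_unique[OF k wk zk t] w_unique[OF z t] by simp
  qed
  show ?thesis
    by (intro exI[of _ \<delta>] exI[of _ K] conjI \<delta> exI[of _ w] w_sol allI impI ballI wk_exists close)
      assumption+
qed

end

lemma limsup_at_left_imp_bounded:
  fixes y :: "real \<Rightarrow> 'a::real_normed_vector"
  assumes cy: "continuous_on {0..<T} y" and T: "0 < T"
    and bdd: "Limsup (at_left T) (\<lambda>t. ereal (norm (y t))) < \<infinity>"
  obtains R0 where "0 \<le> R0" "\<And>t. t \<in> {0..<T} \<Longrightarrow> norm (y t) \<le> R0"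
proof -
  obtain c where "Limsup (at_left T) (\<lambda>t. ereal (norm (y t))) < ereal c"
    using ereal_dense2[OF bdd] by blast
  then have "eventually (\<lambda>t. ereal (norm (y t)) < ereal c) (at_left T)" by (rule Limsup_lessD)
  then obtain b0 where b0: "b0 < T" and b0c: "\<And>t. b0 < t \<Longrightarrow> t < T \<Longrightarrow> norm (y t) < c"
    unfolding eventually_at_left_field by auto
  define a where "a = max 0 b0"
  have a: "0 \<le> a" "a < T" using b0 T by (auto simp: a_def)
  have cya: "continuous_on {0..a} y" using cy a by (auto intro: continuous_on_subset)
  obtain C where C: "\<And>t. t \<in> {0..a} \<Longrightarrow> norm (y t) \<le> C"
    using compact_imp_bounded[OF compact_continuous_image[OF cya compact_Icc]] unfolding bounded_iff by blast
  have "norm (y t) \<le> max 0 (max c C)" if t: "t \<in> {0..<T}" for t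
  proof (cases "t \<le> a")
    case True then show ?thesis using C[of t] t by auto
  next
    case False
    then have "b0 < t" by (simp add: a_def)
    then show ?thesis using b0c[of t] t by auto
  qed
  then show ?thesis by (intro that[of "max 0 (max c C)"]) auto
qed

lemma bdd_above_imageE:
  fixes f :: "'a \<Rightarrow> real"
  assumes "bdd_above (f ` S)"
  obtains B where "0 \<le> B" "\<And>x. x \<in> S \<Longrightarrow> f x \<le> B"
proof -
  obtain B0 where B0: "\<And>x. x \<in> S \<Longrightarrow> f x \<le> B0" using assms by (auto simp: bdd_above_def)
  show ?thesis by (rule that[of "max 0 B0"]) (use B0 in \<open>auto simp: le_max_iff_disj\<close>)
qed

lemma truncated_ode_drift:
  fixes G :: "real \<Rightarrow> real \<Rightarrow> real" and A :: "real \<Rightarrow> real^'n^'n"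
  assumes G_meas: "\<And>r. r \<ge> 0 \<Longrightarrow> (\<lambda>t. G t r) \<in> borel_measurable (lebesgue_on {0..})"
    and G_C1: "\<exists>G'. (\<forall>t\<ge>0. \<forall>r\<ge>0. (G t has_real_derivative G' t r) (at r within {0..}))
                   \<and> (\<forall>t\<ge>0. continuous_on {0..} (G' t))
                   \<and> (\<forall>M>0. bdd_above ((\<lambda>(t, r). \<bar>G' t r\<bar>) ` ({0..M} \<times> {0..M})))"
    and G_zero: "\<And>t. t \<ge> 0 \<Longrightarrow> G t 0 = 0"
    and A_meas: "A \<in> borel_measurable (lebesgue_on {0..})"
    and A_bdd: "\<And>T'. T' > 0 \<Longrightarrow> bdd_above ((\<lambda>t. onorm (\<lambda>x. A t *v x)) ` {0..T'})"
    and R: "0 \<le> R" and T1: "0 < T1"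
  shows "\<exists>L. truncated_ode (drift G A) R L T1"
proof -
  obtain G' where G'd: "\<And>t r. t \<ge> 0 \<Longrightarrow> r \<ge> 0 \<Longrightarrow> (G t has_real_derivative G' t r) (at r within {0..})"
    and G'b: "\<And>M. M > 0 \<Longrightarrow> bdd_above ((\<lambda>(t, r). \<bar>G' t r\<bar>) ` ({0..M} \<times> {0..M}))"
    using G_C1 by blast
  have Gc: "continuous_on {0..} (G t)" if "t \<ge> 0" for t
    using G'd[OF that] by (meson DERIV_continuous atLeast_iff continuous_on_eq_continuous_within)
  define M where "M = max T1 R"
  have M: "0 < M" "T1 \<le> M" "R \<le> M" using T1 by (auto simp: M_def)
  obtain LG where LG: "0 \<le> LG" and LGb: "\<And>t r. t \<in> {0..M} \<Longrightarrow> r \<in> {0..M} \<Longrightarrow> \<bar>G' t r\<bar> \<le> LG"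
    using bdd_above_imageE[OF G'b[OF M(1)]] by (metis (no_types, lifting) SigmaI case_prod_conv)
  obtain LA where LA: "0 \<le> LA" and LAb: "\<And>t. t \<in> {0..T1} \<Longrightarrow> onorm (\<lambda>x. A t *v x) \<le> LA"
    using bdd_above_imageE[OF A_bdd[OF T1]] by metis
  show ?thesis
  proof (intro exI[of _ "3 * LG + LA"] truncated_ode.intro)
    fix s :: real and x z :: "real^'n" assume s: "s \<in> {0..T1}" and "norm x \<le> R" "norm z \<le> R"
    have "\<bar>G' s r\<bar> \<le> LG" if "r \<in> {0..M}" for r using LGb[of s r] s M that by auto
    then show "norm (drift G A s x - drift G A s z) \<le> (3 * LG + LA) * norm (x - z)"
      using G'd G_zero LAb M s \<open>norm x \<le> R\<close> \<open>norm z \<le> R\<close>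
      by (intro drift_lipschitz_on_ball[where M = M and G' = G', OF _ _ _ LG]) auto
  next
    fix w :: "real \<Rightarrow> real^'n" assume w: "w \<in> borel_measurable (lebesgue_on {0..T1})"
    show "(\<lambda>s. drift G A s (w s)) \<in> borel_measurable (lebesgue_on {0..T1})"
      by (rule drift_measurable[OF G_meas Gc A_meas _ w]) auto
  qed (use R T1 LG LA G_zero in \<open>auto simp: drift_def\<close>)
qed

theorem lemma2p1:
  fixes G :: "real \<Rightarrow> real \<Rightarrow> real"
    and A :: "real \<Rightarrow> real^'n^'n"
    and b :: "real \<Rightarrow> 'u::metric_space \<Rightarrow> real^'n"
    and y0 :: "real^'n"
    and T :: real and y :: "real \<Rightarrow> real^'n" and u :: "real \<Rightarrow> 'u"
    and uk :: "nat \<Rightarrow> real \<Rightarrow> 'u"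
  assumes U_sep: "separable_space (euclidean :: 'u topology)"
    and P2_meas: "\<And>r. r \<ge> 0 \<Longrightarrow> (\<lambda>t. G t r) \<in> borel_measurable (lebesgue_on {0..})"
    and P2_C1: "\<exists>G'. (\<forall>t\<ge>0. \<forall>r\<ge>0. (G t has_real_derivative G' t r) (at r within {0..}))
                   \<and> (\<forall>t\<ge>0. continuous_on {0..} (G' t))
                   \<and> (\<forall>M>0. bdd_above ((\<lambda>(t, r). \<bar>G' t r\<bar>) ` ({0..M} \<times> {0..M})))"
    and P2_zero: "\<And>t. t \<ge> 0 \<Longrightarrow> G t 0 = 0"
    and P3_meas: "A \<in> borel_measurable (lebesgue_on {0..})"
    and P3_bdd: "\<And>T'. T' > 0 \<Longrightarrow> bdd_above ((\<lambda>t. onorm (\<lambda>x. A t *v x)) ` {0..T'})"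
    and P4_meas: "\<And>v. (\<lambda>t. b t v) \<in> borel_measurable (lebesgue_on {0..})"
    and P4_cont: "\<And>t. t \<ge> 0 \<Longrightarrow> continuous_on UNIV (b t)"
    and P4_cvx: "\<And>t. t \<ge> 0 \<Longrightarrow> convex (range (b t)) \<and> compact (range (b t))"
    and traj: "(T, y, u) \<in> admissible_triples (rhs G A b) y0"
    and bdd: "Limsup (at_left T) (\<lambda>t. ereal (norm (y t))) < \<infinity>"
    and uk_adm: "\<And>k. k \<ge> 1 \<Longrightarrow> uk k \<in> controls"
    and weak: "weakly_L2 {0..T+1} (\<lambda>k s. b s (uk (k + 1) s)) (\<lambda>s. b s (u s))"
  shows "\<exists>\<delta>>0. \<exists>K::nat. K > 0 \<and>
           (\<exists>ybar. sol_closed (rhs G A b) y0 (T + \<delta>) ybar u) \<and>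
           (\<forall>k\<ge>K. \<exists>yk. sol_closed (rhs G A b) y0 (T + \<delta>) yk (uk k)) \<and>
           (\<forall>k\<ge>K. \<forall>yk ybar. sol_closed (rhs G A b) y0 (T + \<delta>) yk (uk k) \<longrightarrow>
               sol_closed (rhs G A b) y0 (T + \<delta>) ybar u \<longrightarrow>
               (\<forall>t\<in>{0..T+\<delta>}. norm (yk t - ybar t) \<le> 1))"
proof -
  have T: "0 < T" and y: "sol_open (rhs G A b) y0 T y u" using traj by (auto simp: admissible_triples_def)
  obtain R0 where R0: "0 \<le> R0" and yR0: "\<And>t. t \<in> {0..<T} \<Longrightarrow> norm (y t) \<le> R0"
    using limsup_at_left_imp_bounded[OF _ T bdd] y by (auto simp: sol_open_def)
  obtain L where "truncated_ode (drift G A) (R0 + 2) L (T + 1)"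
    using truncated_ode_drift[OF P2_meas P2_C1 P2_zero P3_meas P3_bdd, of "R0 + 2" "T + 1"] R0 T by auto
  then interpret truncated_ode "drift G A" y0 "R0 + 2" L "T + 1" .
  have bu: "(\<lambda>s. b s (u s)) absolutely_integrable_on {0..T + 1}"
    and buk: "\<And>k. (\<lambda>s. b s (uk (k + 1) s)) absolutely_integrable_on {0..T + 1}"
    using weak by (auto simp: weakly_L2_def intro: in_L2_imp_absolutely_integrable)
  have y_sol: "solves_on (\<lambda>s x. drift G A s x + b s (u s)) y0 \<tau> y" if "\<tau> \<in> {0<..<T}" for \<tau>
    using sol_open_rhs_imp_solves_on[OF y] that by simp
  have "\<exists>\<delta>>0. \<exists>K. T + \<delta> \<le> T + 1 \<and>
    (\<exists>z. solves_on (\<lambda>s x. drift G A s x + b s (u s)) y0 (T + \<delta>) z) \<and>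
    (\<forall>k\<ge>K. \<exists>zk. solves_on (\<lambda>s x. drift G A s x + b s (uk (k + 1) s)) y0 (T + \<delta>) zk) \<and>
    (\<forall>k\<ge>K. \<forall>zk z. solves_on (\<lambda>s x. drift G A s x + b s (uk (k + 1) s)) y0 (T + \<delta>) zk \<longrightarrow>
       solves_on (\<lambda>s x. drift G A s x + b s (u s)) y0 (T + \<delta>) z \<longrightarrow> (\<forall>t\<in>{0..T + \<delta>}. norm (zk t - z t) \<le> 1))"
    by (rule perturbed_solutions_close[OF _ _ y_sol yR0 _ bu buk weakly_L2_imp_weakly_null_on[OF weak]])
      (use T in auto)
  then obtain \<delta> K where \<delta>: "0 < \<delta>"
    and sol: "\<exists>z. solves_on (\<lambda>s x. drift G A s x + b s (u s)) y0 (T + \<delta>) z"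
    and sol_k: "\<forall>k\<ge>K. \<exists>zk. solves_on (\<lambda>s x. drift G A s x + b s (uk (k + 1) s)) y0 (T + \<delta>) zk"
    and close: "\<forall>k\<ge>K. \<forall>zk z. solves_on (\<lambda>s x. drift G A s x + b s (uk (k + 1) s)) y0 (T + \<delta>) zk \<longrightarrow>
       solves_on (\<lambda>s x. drift G A s x + b s (u s)) y0 (T + \<delta>) z \<longrightarrow> (\<forall>t\<in>{0..T + \<delta>}. norm (zk t - z t) \<le> 1)"
    by blast
  show ?thesis
    unfolding sol_closed_rhs_iff
  proof (intro exI[of _ \<delta>] exI[of _ "K + 1"] conjI allI impI \<delta> sol)
    fix k assume "K + 1 \<le> k"
    then obtain j where j: "K \<le> j" and k: "k = j + 1" by (metis add_le_imp_le_right le_add_diff_inverse2 le_add2 order_trans)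
    show "\<exists>yk. solves_on (\<lambda>s x. drift G A s x + b s (uk k s)) y0 (T + \<delta>) yk" using sol_k j unfolding k by blast
    fix yk ybar
    assume "solves_on (\<lambda>s x. drift G A s x + b s (uk k s)) y0 (T + \<delta>) yk"
      and "solves_on (\<lambda>s x. drift G A s x + b s (u s)) y0 (T + \<delta>) ybar"
    then show "\<forall>t\<in>{0..T + \<delta>}. norm (yk t - ybar t) \<le> 1" using close j unfolding k by blast
  qed simp
qed

end
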